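(* Let $0<\varepsilon<\frac12$, let $n\ge C\varepsilon^{-2.01}$ for a sufficiently large constant $C$, let $c>0$ be a sufficiently small constant, set $r=s=c\log(n)/\sqrt{\varepsilon}$ and $k=(n-1)/(r+1)$ (assumed an integer), and let $A=UDU^\top$ be drawn from the distribution described in the context. Let $g_1,\dots,g_s\sim\mathcal{N}(0,I_n)$ be i.i.d. and independent of $A$. For each $j\in[s]$ let $a_{j,1}=|\langle g_j,u_1\rangle|$, where $u_1$ is the top eigenvector of $A$; for each $2\le t\le r+2$ let $P_t$ be the orthogonal projection onto the $\lambda_t$-eigenspace $E_t$ of $A$ (of dimension $k$), let $a_{j,t}=\|P_tg_j\|_2$ and $v_{j,t}=P_tg_j/a_{j,t}$, and let $V^{(t)}\in\mathbb{R}^{n\times s}$ be the matrix whose $j$-th column is $v_{j,t}$. Assume $k\ge 100s$. Then with probability at least $0.9$ all of the following hold: (1) $a_{j,1}\le 5\sqrt{\log n}$ for all $j\in[s]$; (2) $0.5\sqrt{k}\le a_{j,t}\le 2\sqrt{k}$ for all $j\in[s]$ and all $2\le t\le r+2$; (3) for every $2\le t\le r+2$, all singular values of $V^{(t)}$ lie in $[\frac14,4]$.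
   Context: Hard distribution: $\lambda_1=1+2\varepsilon$ and $\lambda_t=\cos\left(\frac{t-2}{r}\pi\right)$ for $2\le t\le r+2$. $D$ is the $n\times n$ diagonal matrix with $D_{1,1}=\lambda_1$ and $D_{i,i}=\lambda_{1+\lceil (i-1)/k\rceil}$ for $2\le i\le n$, so each $\lambda_t$, $2\le t\le r+2$, appears exactly $k$ times. $U$ is a Haar-random (uniformly random) $n\times n$ orthogonal matrix and $A=UDU^\top$. *)

theory Defs
  imports "HOL-Probability.Probability"
begin

(* Matrices/vectors with size varying inside the statement: n x n matrices are
   functions (nat \<times> nat) \<Rightarrow> real, entries (i,j) with i,j < n, 0-based indices.
   Paper index i corresponds to index i-1 here. *)

type_synonym rmat = "nat \<times> nat \<Rightarrow> real"

definition lam :: "real \<Rightarrow> nat \<Rightarrow> nat \<Rightarrow> real" where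
  "lam \<epsilon> r t = (if t = 1 then 1 + 2 * \<epsilon> else cos (real (t - 2) / real r * pi))"

(* diagonal of D, 0-based: Ddiag 0 = lambda_1, Ddiag i = lambda_{1 + ceil(i/k)} for 1 \<le> i \<le> n-1
   (paper: D_{i+1,i+1} = lambda_{1+ceil(i/k)}) *)
definition Ddiag :: "real \<Rightarrow> nat \<Rightarrow> nat \<Rightarrow> nat \<Rightarrow> real" where
  "Ddiag \<epsilon> r k i = (if i = 0 then lam \<epsilon> r 1 else lam \<epsilon> r (1 + nat \<lceil>real i / real k\<rceil>))"

definition Amat :: "real \<Rightarrow> nat \<Rightarrow> nat \<Rightarrow> nat \<Rightarrow> rmat \<Rightarrow> rmat" where
  "Amat \<epsilon> r k n U = restrict (\<lambda>(i,j). \<Sum>l<n. U (i,l) * Ddiag \<epsilon> r k l * U (j,l)) ({..<n} \<times> {..<n})"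

definition mat_mult :: "nat \<Rightarrow> rmat \<Rightarrow> rmat \<Rightarrow> rmat" where
  "mat_mult n M N = restrict (\<lambda>(i,j). \<Sum>l<n. M (i,l) * N (l,j)) ({..<n} \<times> {..<n})"

definition orthogonal_mat :: "nat \<Rightarrow> rmat \<Rightarrow> bool" where
  "orthogonal_mat n U \<longleftrightarrow>
     (\<forall>i<n. \<forall>j<n. (\<Sum>l<n. U (l,i) * U (l,j)) = (if i = j then 1 else 0))"

definition mat_space :: "nat \<Rightarrow> rmat measure" where
  "mat_space n = PiM ({..<n} \<times> {..<n}) (\<lambda>_. lborel)"

(* Haar (uniform) probability measure on the orthogonal group O(n): a probability measure
   concentrated on orthogonal matrices and invariant under left multiplication by every
   orthogonal matrix (this characterizes it uniquely). *)
definition haar_orthogonal :: "nat \<Rightarrow> rmat measure \<Rightarrow> bool" where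
  "haar_orthogonal n \<mu> \<longleftrightarrow>
     sets \<mu> = sets (mat_space n) \<and> prob_space \<mu> \<and>
     (AE U in \<mu>. orthogonal_mat n U) \<and>
     (\<forall>Q. orthogonal_mat n Q \<longrightarrow> distr \<mu> (mat_space n) (\<lambda>U. mat_mult n Q U) = \<mu>)"

(* s i.i.d. N(0, I_n) vectors: G (j,l) is the l-th coordinate of g_{j+1} *)
definition gauss_meas :: "nat \<Rightarrow> nat \<Rightarrow> rmat measure" where
  "gauss_meas s n = PiM ({..<s} \<times> {..<n}) (\<lambda>_. density lborel std_normal_density)"

(* <g_j, u_i>, u_i the i-th column of U *)
definition gdotu :: "nat \<Rightarrow> rmat \<Rightarrow> rmat \<Rightarrow> nat \<Rightarrow> nat \<Rightarrow> real" where
  "gdotu n U G j i = (\<Sum>l<n. G (j,l) * U (l,i))"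

(* P_t g_j, the orthogonal projection of g_j onto the lambda_t-eigenspace of A = U D U^T,
   i.e. U 1[D = lambda_t] U^T g_j; coordinate m *)
definition Pg :: "real \<Rightarrow> nat \<Rightarrow> nat \<Rightarrow> nat \<Rightarrow> rmat \<Rightarrow> rmat \<Rightarrow> nat \<Rightarrow> nat \<Rightarrow> nat \<Rightarrow> real" where
  "Pg \<epsilon> r k n U G t j m =
     (\<Sum>i\<in>{i. i < n \<and> Ddiag \<epsilon> r k i = lam \<epsilon> r t}. gdotu n U G j i * U (m,i))"

definition acoef :: "real \<Rightarrow> nat \<Rightarrow> nat \<Rightarrow> nat \<Rightarrow> rmat \<Rightarrow> rmat \<Rightarrow> nat \<Rightarrow> nat \<Rightarrow> real" where
  "acoef \<epsilon> r k n U G t j = sqrt (\<Sum>m<n. (Pg \<epsilon> r k n U G t j m)\<^sup>2)"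

definition Vmat :: "real \<Rightarrow> nat \<Rightarrow> nat \<Rightarrow> nat \<Rightarrow> nat \<Rightarrow> rmat \<Rightarrow> rmat \<Rightarrow> nat \<Rightarrow> rmat" where
  "Vmat \<epsilon> r k n s U G t = restrict (\<lambda>(m,j). Pg \<epsilon> r k n U G t j m / acoef \<epsilon> r k n U G t j)
                                  ({..<n} \<times> {..<s})"

(* sigma is a singular value of the p x q matrix V (p \<ge> q): sigma \<ge> 0 and sigma^2 is an
   eigenvalue of V^T V *)
definition singular_value :: "nat \<Rightarrow> nat \<Rightarrow> rmat \<Rightarrow> real \<Rightarrow> bool" where
  "singular_value p q V \<sigma> \<longleftrightarrow> \<sigma> \<ge> 0 \<and>
     (\<exists>x::nat \<Rightarrow> real. (\<exists>j<q. x j \<noteq> 0) \<and>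
        (\<forall>j<q. (\<Sum>l<q. (\<Sum>i<p. V (i,j) * V (i,l)) * x l) = \<sigma>\<^sup>2 * x j))"

definition good_event :: "real \<Rightarrow> nat \<Rightarrow> nat \<Rightarrow> nat \<Rightarrow> nat \<Rightarrow> rmat \<Rightarrow> rmat \<Rightarrow> bool" where
  "good_event \<epsilon> n r s k U G \<longleftrightarrow>
     (\<forall>j<s. \<bar>gdotu n U G j 0\<bar> \<le> 5 * sqrt (ln (real n))) \<and>
     (\<forall>j<s. \<forall>t\<in>{2..r+2}. 0.5 * sqrt (real k) \<le> acoef \<epsilon> r k n U G t j \<and>
                          acoef \<epsilon> r k n U G t j \<le> 2 * sqrt (real k)) \<and>
     (\<forall>t\<in>{2..r+2}. \<forall>\<sigma>. singular_value n s (Vmat \<epsilon> r k n s U G t) \<sigma> \<longrightarrow> 1/4 \<le> \<sigma> \<and> \<sigma> \<le> 4)"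

end

theory Submission
  imports Defs "Jordan_Normal_Form.Determinant"
begin

(* Hence
   a_jt^2 = sum of h_ji^2 over the k indices i of E_t has mean k and variance 2k (Chebyshev), and the
   off-diagonal Gram entries <P_t g_j, P_t g_l> have second moment k, so by Markov their total squared
   mass over all t is below k^2/64 with high probability. Then the Gram matrix of V^(t) has unit
   diagonal and off-diagonal Frobenius norm below 1/2, which keeps its eigenvalues in [1/2, 3/2] by
   Cauchy-Schwarz on each row. The bound on a_j1 is a Gaussian tail. The failure probability is
   O(s n^-5 + r s^2 / k) = O(r^4 / n), small because r^4 <= (804 c)^4 n. *)

section \<open>Standard Gaussian vectors\<close>

definition std_normal :: "real measure" where
  "std_normal = density lborel std_normal_density"

abbreviation std_gaussian :: "'i set \<Rightarrow> ('i \<Rightarrow> real) measure" where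
  "std_gaussian I \<equiv> PiM I (\<lambda>_. std_normal)"

lemma prob_space_std_normal: "prob_space std_normal"
  unfolding std_normal_def by (rule prob_space_normal_density) simp

lemma sets_std_normal [measurable_cong]: "sets std_normal = sets borel"
  unfolding std_normal_def by simp

lemma product_prob_space_std_normal: "product_prob_space (\<lambda>_. std_normal)"
  using prob_space.emeasure_space_1[OF prob_space_std_normal]
    sigma_finite_measure.sigma_finite_countable[OF prob_space_imp_sigma_finite[OF prob_space_std_normal]]
  by unfold_locales auto

lemma prob_space_std_gaussian: "prob_space (std_gaussian I)"
  by (rule prob_space_PiM) (rule prob_space_std_normal)

lemma gauss_meas_eq_std_gaussian: "gauss_meas s n = std_gaussian ({..<s} \<times> {..<n})"
  unfolding gauss_meas_def std_normal_def ..

lemma prob_space_gauss_meas: "prob_space (gauss_meas s n)"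
  unfolding gauss_meas_eq_std_gaussian by (rule prob_space_std_gaussian)

lemma distr_std_gaussian_component:
  assumes "i \<in> I"
  shows "distr (std_gaussian I) borel (\<lambda>G. G i) = std_normal"
proof -
  interpret product_prob_space "\<lambda>_. std_normal" I by (rule product_prob_space_std_normal)
  have "distr (std_gaussian I) borel (\<lambda>G. G i) = distr (std_gaussian I) std_normal (\<lambda>G. G i)"
    by (rule distr_cong) (simp_all add: sets_std_normal)
  also have "\<dots> = std_normal" by (rule PiM_component[OF assms])
  finally show ?thesis .
qed

lemma std_gaussian_component_distributed:
  assumes "i \<in> I"
  shows "distributed (std_gaussian I) lborel (\<lambda>G. G i) std_normal_density"
  using distr_std_gaussian_component[OF assms] assms
  unfolding distributed_def std_normal_def by (auto cong: distr_cong)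

lemma std_gaussian_components_indep:
  assumes "I \<noteq> {}"
  shows "prob_space.indep_vars (std_gaussian I) (\<lambda>_. borel) (\<lambda>i G. G i) I"
proof -
  interpret product_prob_space "\<lambda>_. std_normal" I by (rule product_prob_space_std_normal)
  have "distr (std_gaussian I) (PiM I (\<lambda>_. borel)) (\<lambda>x. \<lambda>i\<in>I. x i) =
      distr (std_gaussian I) (std_gaussian I) (\<lambda>x. x)"
    by (rule distr_cong) (auto simp: space_PiM sets_std_normal intro!: sets_PiM_cong)
  then show ?thesis
    by (subst indep_vars_iff_distr_eq_PiM'[OF assms])
       (simp_all add: distr_std_gaussian_component cong: PiM_cong)
qed

definition lin_form :: "'i set \<Rightarrow> ('i \<Rightarrow> real) \<Rightarrow> ('i \<Rightarrow> real) \<Rightarrow> real" where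
  "lin_form I c G = (\<Sum>x\<in>I. c x * G x)"

definition dot_on :: "'i set \<Rightarrow> ('i \<Rightarrow> real) \<Rightarrow> ('i \<Rightarrow> real) \<Rightarrow> real" where
  "dot_on I a b = (\<Sum>x\<in>I. a x * b x)"

lemma dot_on_commute: "dot_on I a b = dot_on I b a"
  unfolding dot_on_def by (simp add: mult.commute)

lemma dot_on_self_nonneg: "0 \<le> dot_on I c c"
  unfolding dot_on_def by (auto intro: sum_nonneg)

lemma lin_form_distributed:
  assumes fin: "finite I" and pos: "dot_on I c c > 0"
  shows "distributed (std_gaussian I) lborel (lin_form I c) (normal_density 0 (sqrt (dot_on I c c)))"
proof -
  interpret P: prob_space "std_gaussian I" by (rule prob_space_std_gaussian)
  define J where "J = {x\<in>I. c x \<noteq> 0}"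
  have JI: "J \<subseteq> I" and fJ: "finite J" using fin by (auto simp: J_def)
  have dot_J: "dot_on I c c = (\<Sum>x\<in>J. (c x)^2)"
    unfolding dot_on_def power2_eq_square by (rule sum.mono_neutral_right[OF fin JI]) (auto simp: J_def)
  have form_J: "lin_form I c = (\<lambda>G. \<Sum>x\<in>J. c x * G x)"
    unfolding lin_form_def by (rule ext, rule sum.mono_neutral_right[OF fin JI]) (auto simp: J_def)
  have "J \<noteq> {}" using pos dot_J by auto
  moreover have "P.indep_vars (\<lambda>_. borel) (\<lambda>x G. c x * G x) J"
    using P.indep_vars_compose[OF P.indep_vars_subset[OF std_gaussian_components_indep JI],
        of "\<lambda>x y. c x * y" "\<lambda>_. borel"] JI \<open>J \<noteq> {}\<close>
    by (auto simp: o_def)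
  moreover have "distributed (std_gaussian I) lborel (\<lambda>G. c x * G x) (normal_density 0 \<bar>c x\<bar>)"
    if "x \<in> J" for x
    using P.normal_density_affine[OF std_gaussian_component_distributed[of x I], of "c x" 0] that JI
    by (auto simp: J_def)
  ultimately have "distributed (std_gaussian I) lborel (\<lambda>G. \<Sum>x\<in>J. c x * G x)
         (normal_density (\<Sum>x\<in>J. 0) (sqrt (\<Sum>x\<in>J. \<bar>c x\<bar>^2)))"
    by (intro P.sum_indep_normal[OF fJ]) (auto simp: J_def)
  then show ?thesis by (simp add: form_J dot_J)
qed

lemma lin_form_moments:
  assumes fin: "finite I"
  shows "integrable (std_gaussian I) (\<lambda>G. (lin_form I c G)^m)"
    and "integral\<^sup>L (std_gaussian I) (\<lambda>G. (lin_form I c G)^2) = dot_on I c c"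
    and "integral\<^sup>L (std_gaussian I) (\<lambda>G. (lin_form I c G)^4) = 3 * (dot_on I c c)^2"
proof -
  interpret prob_space "std_gaussian I" by (rule prob_space_std_gaussian)
  have "integrable (std_gaussian I) (\<lambda>G. (lin_form I c G)^m) \<and>
    integral\<^sup>L (std_gaussian I) (\<lambda>G. (lin_form I c G)^2) = dot_on I c c \<and>
    integral\<^sup>L (std_gaussian I) (\<lambda>G. (lin_form I c G)^4) = 3 * (dot_on I c c)^2"
  proof (cases "dot_on I c c > 0")
    case True
    define \<sigma> where "\<sigma> = sqrt (dot_on I c c)"
    have \<sigma>: "\<sigma> > 0" "\<sigma>^2 = dot_on I c c" using True by (simp_all add: \<sigma>_def)
    have D: "distributed (std_gaussian I) lborel (lin_form I c) (normal_density 0 \<sigma>)"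
      using lin_form_distributed[OF fin True] by (simp add: \<sigma>_def)
    have "integrable (std_gaussian I) (\<lambda>G. (lin_form I c G)^m)" for m
      using distributed_integrable[OF D, of "\<lambda>x. x^m"] integrable_normal_moment[of \<sigma> 0 m] \<sigma>
      by simp
    moreover have even: "integral\<^sup>L (std_gaussian I) (\<lambda>G. (lin_form I c G)^(2*k)) =
             fact (2 * k) / ((2 / \<sigma>\<^sup>2)^k * fact k)" for k
      using distributed_integral[OF D, of "\<lambda>x. x^(2*k)"] integral_normal_moment_even[of \<sigma> 0 k] \<sigma>
      by simp
    ultimately show ?thesis using even[of 1] even[of 2] \<sigma>
      by (simp add: fact_numeral power2_eq_square field_simps)
  next
    case False
    then have "dot_on I c c = 0" using dot_on_self_nonneg[of I c] by simp
    then have "\<forall>x\<in>I. c x * c x = 0"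
      unfolding dot_on_def using sum_nonneg_eq_0_iff[OF fin, of "\<lambda>x. c x * c x"] by simp
    then have "lin_form I c G = 0" for G unfolding lin_form_def by simp
    then show ?thesis using \<open>dot_on I c c = 0\<close> by (simp add: zero_power)
  qed
  then show "integrable (std_gaussian I) (\<lambda>G. (lin_form I c G)^m)"
    and "integral\<^sup>L (std_gaussian I) (\<lambda>G. (lin_form I c G)^2) = dot_on I c c"
    and "integral\<^sup>L (std_gaussian I) (\<lambda>G. (lin_form I c G)^4) = 3 * (dot_on I c c)^2" by auto
qed

lemma fourth_power_polarization:
  fixes A B C D :: real
  shows "A * B * C * D = (\<Sum>e2\<in>{-1,1}. \<Sum>e3\<in>{-1,1}. \<Sum>e4\<in>{-1,1}.
           e2 * e3 * e4 * (A + e2 * B + e3 * C + e4 * D)^4) / 192"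
  by (simp add: algebra_simps power4_eq_xxxx power2_eq_square)

lemma lin_form_add_scaled:
  "lin_form I (\<lambda>x. a x + e2 * b x + e3 * c x + e4 * d x) G =
   lin_form I a G + e2 * lin_form I b G + e3 * lin_form I c G + e4 * lin_form I d G"
  unfolding lin_form_def by (simp add: sum.distrib sum_distrib_left algebra_simps)

lemma dot_on_add_scaled:
  fixes a b c d :: "'i \<Rightarrow> real" and e2 e3 e4 :: real
  defines "w \<equiv> \<lambda>x. a x + e2 * b x + e3 * c x + e4 * d x"
  shows "dot_on I w w = dot_on I a a + e2^2 * dot_on I b b + e3^2 * dot_on I c c
    + e4^2 * dot_on I d d + 2*e2*dot_on I a b + 2*e3*dot_on I a c + 2*e4*dot_on I a d
    + 2*e2*e3*dot_on I b c + 2*e2*e4*dot_on I b d + 2*e3*e4 * dot_on I c d"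
  unfolding dot_on_def w_def sum_distrib_left sum.distrib[symmetric]
  by (rule sum.cong) (auto simp: algebra_simps power2_eq_square)

text \<open>Isserlis' formula, by polarizing \<open>E[L\<^sub>w\<^sup>4] = 3 \<parallel>w\<parallel>\<^sup>4\<close> over the eight forms \<open>w = a \<plusminus> b \<plusminus> c \<plusminus> d\<close>.\<close>
lemma lin_form_isserlis:
  assumes fin: "finite I"
  shows "integrable (std_gaussian I) (\<lambda>G. lin_form I a G * lin_form I b G * lin_form I c G * lin_form I d G)"
    and "integral\<^sup>L (std_gaussian I) (\<lambda>G. lin_form I a G * lin_form I b G * lin_form I c G * lin_form I d G) =
         dot_on I a b * dot_on I c d + dot_on I a c * dot_on I b d + dot_on I a d * dot_on I b c"
proof -
  define w where "w e2 e3 e4 = (\<lambda>x. a x + e2 * b x + e3 * c x + e4 * d x)" for e2 e3 e4 :: real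
  have polar: "lin_form I a G * lin_form I b G * lin_form I c G * lin_form I d G =
      (\<Sum>e2\<in>{-1,1}. \<Sum>e3\<in>{-1,1}. \<Sum>e4\<in>{-1,1}. e2 * e3 * e4 * (lin_form I (w e2 e3 e4) G)^4) / 192" for G
    unfolding w_def lin_form_add_scaled by (rule fourth_power_polarization)
  have int4: "integrable (std_gaussian I) (\<lambda>G. (lin_form I (w e2 e3 e4) G)^4)" for e2 e3 e4
    using lin_form_moments(1)[OF fin] by blast
  show "integrable (std_gaussian I) (\<lambda>G. lin_form I a G * lin_form I b G * lin_form I c G * lin_form I d G)"
    unfolding polar using int4 by simp
  have "integral\<^sup>L (std_gaussian I) (\<lambda>G. lin_form I a G * lin_form I b G * lin_form I c G * lin_form I d G) =
      (\<Sum>e2\<in>{-1,1}. \<Sum>e3\<in>{-1,1}. \<Sum>e4\<in>{-1,1}. e2 * e3 * e4 * (3 * (dot_on I (w e2 e3 e4) (w e2 e3 e4))^2)) / 192"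
    unfolding polar using int4 by (simp add: lin_form_moments(3)[OF fin])
  also have "\<dots> = dot_on I a b * dot_on I c d + dot_on I a c * dot_on I b d + dot_on I a d * dot_on I b c"
    unfolding w_def dot_on_add_scaled
    by (simp add: dot_on_commute[of I b a] dot_on_commute[of I c a] dot_on_commute[of I d a]
        dot_on_commute[of I c b] dot_on_commute[of I d b] dot_on_commute[of I d c]
        algebra_simps power2_eq_square)
  finally show "integral\<^sup>L (std_gaussian I) (\<lambda>G. lin_form I a G * lin_form I b G * lin_form I c G * lin_form I d G) =
         dot_on I a b * dot_on I c d + dot_on I a c * dot_on I b d + dot_on I a d * dot_on I b c" .
qed

lemma std_normal_density_times_exp:
  "std_normal_density x * exp (x^2/4) = sqrt 2 * normal_density 0 (sqrt 2) x"
proof -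
  have "exp (-(x^2/2)) * exp (x^2/4) = exp (-(x^2/4))"
    unfolding exp_add[symmetric] by (rule arg_cong[where f=exp]) (simp add: field_simps)
  then show ?thesis
    by (simp add: std_normal_density_def normal_density_def real_sqrt_mult field_simps)
qed

lemma lin_form_square_tail:
  assumes fin: "finite I" and unit: "dot_on I c c = 1" and a: "a > 0"
  shows "measure (std_gaussian I) {G \<in> space (std_gaussian I). a \<le> (lin_form I c G)^2}
          \<le> sqrt 2 * exp (- a / 4)"
proof -
  have D: "distributed (std_gaussian I) lborel (lin_form I c) std_normal_density"
    using lin_form_distributed[OF fin, of c] unit by simp
  have int: "integrable (std_gaussian I) (\<lambda>G. exp ((lin_form I c G)^2/4))"
    using distributed_integrable[OF D, of "\<lambda>x. exp (x^2/4)"]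
    unfolding std_normal_density_times_exp by simp
  have E: "integral\<^sup>L (std_gaussian I) (\<lambda>G. exp ((lin_form I c G)^2/4)) = sqrt 2"
    using distributed_integral[OF D, of "\<lambda>x. exp (x^2/4)"]
    unfolding std_normal_density_times_exp by simp
  have "{G \<in> space (std_gaussian I). a \<le> (lin_form I c G)^2} =
        {G \<in> space (std_gaussian I). exp (a/4) \<le> exp ((lin_form I c G)^2/4)}" by auto
  also have "measure (std_gaussian I) \<dots> \<le> sqrt 2 / exp (a/4)"
    using integral_Markov_inequality_measure[OF int, of "space (std_gaussian I)" "exp (a/4)"]
    unfolding E by auto
  also have "\<dots> = sqrt 2 * exp (- a / 4)" by (simp add: exp_minus field_simps)
  finally show ?thesis .
qed

section \<open>Matrices with unit diagonal\<close>

lemma eigenvalue_near_one_if_offdiag_small: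
  fixes M :: "nat \<times> nat \<Rightarrow> real" and x :: "nat \<Rightarrow> real"
  assumes diag: "\<forall>j<s. M(j,j) = 1"
    and off: "(\<Sum>j<s. \<Sum>l\<in>{..<s}-{j}. (M(j,l))\<^sup>2) \<le> \<delta>"
    and nz: "\<exists>j<s. x j \<noteq> 0"
    and ev: "\<forall>j<s. (\<Sum>l<s. M(j,l) * x l) = lm * x j"
  shows "(lm - 1)\<^sup>2 \<le> \<delta>"
proof -
  define X where "X = (\<Sum>l<s. (x l)\<^sup>2)"
  have Xpos: "X > 0"
  proof -
    obtain j where j: "j < s" "x j \<noteq> 0" using nz by auto
    have "(x j)\<^sup>2 \<le> X" unfolding X_def by (rule member_le_sum) (use j in auto)
    moreover have "(x j)\<^sup>2 > 0" using j by simp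
    ultimately show ?thesis by linarith
  qed
  have row: "((lm - 1) * x j)\<^sup>2 \<le> (\<Sum>l\<in>{..<s}-{j}. (M(j,l))\<^sup>2) * X" if j: "j < s" for j
  proof -
    have "(\<Sum>l<s. M(j,l) * x l) = M(j,j) * x j + (\<Sum>l\<in>{..<s}-{j}. M(j,l) * x l)"
      using j by (subst sum.remove[of _ j]) auto
    then have "(lm - 1) * x j = (\<Sum>l\<in>{..<s}-{j}. M(j,l) * x l)"
      using ev diag j by (auto simp: algebra_simps)
    then have "((lm - 1) * x j)\<^sup>2 \<le> (\<Sum>l\<in>{..<s}-{j}. (M(j,l))\<^sup>2) * (\<Sum>l\<in>{..<s}-{j}. (x l)\<^sup>2)"
      using Cauchy_Schwarz_ineq_sum by simp
    also have "\<dots> \<le> (\<Sum>l\<in>{..<s}-{j}. (M(j,l))\<^sup>2) * X"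
      unfolding X_def by (intro mult_left_mono sum_mono2) (auto intro: sum_nonneg)
    finally show ?thesis .
  qed
  have "(lm - 1)\<^sup>2 * X = (\<Sum>j<s. ((lm - 1) * x j)\<^sup>2)"
    unfolding X_def by (simp add: sum_distrib_left power_mult_distrib)
  also have "\<dots> \<le> (\<Sum>j<s. (\<Sum>l\<in>{..<s}-{j}. (M(j,l))\<^sup>2) * X)"
    by (rule sum_mono) (use row in auto)
  also have "\<dots> = (\<Sum>j<s. \<Sum>l\<in>{..<s}-{j}. (M(j,l))\<^sup>2) * X"
    by (simp add: sum_distrib_right)
  also have "\<dots> \<le> \<delta> * X" using off Xpos by (intro mult_right_mono) auto
  finally show ?thesis using Xpos by simp
qed

lemma singular_value_bounds_of_gram:
  fixes V :: rmat
  assumes diag: "\<forall>j<s. (\<Sum>i<p. V(i,j) * V(i,j)) = 1"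
    and off: "(\<Sum>j<s. \<Sum>l\<in>{..<s}-{j}. (\<Sum>i<p. V(i,j) * V(i,l))\<^sup>2) \<le> 1/4"
    and sv: "singular_value p s V \<sigma>"
  shows "1/4 \<le> \<sigma> \<and> \<sigma> \<le> 4"
proof -
  from sv obtain x where \<sigma>: "\<sigma> \<ge> 0" and nz: "\<exists>j<s. x j \<noteq> 0"
    and ev: "\<forall>j<s. (\<Sum>l<s. (\<Sum>i<p. V (i,j) * V (i,l)) * x l) = \<sigma>\<^sup>2 * x j"
    unfolding singular_value_def by blast
  have "(\<sigma>\<^sup>2 - 1)\<^sup>2 \<le> (1/2)\<^sup>2"
    by (rule eigenvalue_near_one_if_offdiag_small[where M="\<lambda>(j,l). \<Sum>i<p. V (i,j) * V (i,l)" and x=x and s=s])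
       (use diag off nz ev in \<open>auto simp: power2_eq_square\<close>)
  then have dist: "\<bar>\<sigma>\<^sup>2 - 1\<bar> \<le> 1/2" using power2_le_imp_le[of "\<bar>\<sigma>\<^sup>2 - 1\<bar>" "1/2"] by simp
  have "(1/4)\<^sup>2 \<le> \<sigma>\<^sup>2" "\<sigma>\<^sup>2 \<le> 4\<^sup>2"
    using abs_le_D1[OF dist] abs_le_D2[OF dist] by (simp_all add: power2_eq_square)
  then show ?thesis using \<sigma> power2_le_imp_le[of "1/4" \<sigma>] power2_le_imp_le[of \<sigma> 4] by simp
qed

section \<open>Gaussian coordinates in an orthonormal basis\<close>

definition gdotu_coeff :: "rmat \<Rightarrow> nat \<Rightarrow> nat \<Rightarrow> nat \<times> nat \<Rightarrow> real" where
  "gdotu_coeff U j i = (\<lambda>(j', l). if j' = j then U (l, i) else 0)"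

lemma sum_product_if_fst_eq:
  fixes f :: "nat \<Rightarrow> real" and s n j :: nat
  assumes "j < s"
  shows "(\<Sum>x\<in>{..<s}\<times>{..<n}. if fst x = j then f (snd x) else 0) = (\<Sum>l<n. f l)"
proof -
  have "(\<Sum>x\<in>{..<s}\<times>{..<n}. if fst x = j then f (snd x) else 0) =
        (\<Sum>j'<s. \<Sum>l<n. if j' = j then f l else 0)"
    by (simp add: sum.cartesian_product case_prod_beta)
  also have "\<dots> = (\<Sum>j'<s. if j' = j then (\<Sum>l<n. f l) else 0)"
    by (rule sum.cong) auto
  finally show ?thesis using assms by simp
qed

lemma gdotu_eq_lin_form:
  assumes "j < s"
  shows "gdotu n U G j i = lin_form ({..<s}\<times>{..<n}) (gdotu_coeff U j i) G"
proof -
  have "lin_form ({..<s}\<times>{..<n}) (gdotu_coeff U j i) G =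
     (\<Sum>x\<in>{..<s}\<times>{..<n}. if fst x = j then U (snd x, i) * G (j, snd x) else 0)"
    unfolding lin_form_def gdotu_coeff_def by (rule sum.cong) auto
  also have "\<dots> = (\<Sum>l<n. U (l, i) * G (j, l))" by (rule sum_product_if_fst_eq[OF assms])
  finally show ?thesis unfolding gdotu_def by (simp add: mult.commute)
qed

lemma dot_on_gdotu_coeff:
  assumes "j < s" "l < s" "Defs.orthogonal_mat n U" "i < n" "i' < n"
  shows "dot_on ({..<s}\<times>{..<n}) (gdotu_coeff U j i) (gdotu_coeff U l i') =
    (if j = l \<and> i = i' then 1 else 0)"
proof (cases "j = l")
  case True
  have "dot_on ({..<s}\<times>{..<n}) (gdotu_coeff U j i) (gdotu_coeff U l i') =
     (\<Sum>x\<in>{..<s}\<times>{..<n}. if fst x = j then U (snd x, i) * U (snd x, i') else 0)"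
    unfolding dot_on_def gdotu_coeff_def using True by (intro sum.cong) auto
  also have "\<dots> = (\<Sum>m<n. U (m, i) * U (m, i'))" by (rule sum_product_if_fst_eq[OF assms(1)])
  finally show ?thesis using assms True unfolding Defs.orthogonal_mat_def by auto
next
  case False
  then show ?thesis unfolding dot_on_def gdotu_coeff_def by (auto intro!: sum.neutral)
qed

lemma borel_measurable_PiM_apply:
  assumes "\<And>i. sets (K i) = sets borel"
  shows "(\<lambda>U. U x) \<in> borel_measurable (PiM I K)"
proof (cases "x \<in> I")
  case True
  have "(\<lambda>U. U x) \<in> measurable (PiM I K) (K x)" by (rule measurable_component_singleton[OF True])
  moreover have "measurable (PiM I K) (K x) = borel_measurable (PiM I K)"
    by (rule measurable_cong_sets) (simp_all add: assms)
  ultimately show ?thesis by simp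
next
  case False
  then have "\<forall>U\<in>space (PiM I K). U x = undefined"
    by (auto simp: space_PiM PiE_def extensional_def)
  then show ?thesis by (subst measurable_cong[where g="\<lambda>_. undefined"]) auto
qed

lemma gauss_meas_apply_measurable [measurable]: "(\<lambda>G. G x) \<in> borel_measurable (gauss_meas s n)"
  unfolding gauss_meas_def by (rule borel_measurable_PiM_apply) simp

lemma mat_space_apply_measurable [measurable]: "(\<lambda>U. U x) \<in> borel_measurable (mat_space n)"
  unfolding mat_space_def by (rule borel_measurable_PiM_apply) simp

text \<open>\<open>\<langle>P g\<^sub>j, P g\<^sub>l\<rangle>\<close> for the projection \<open>P\<close> onto the span of the columns \<open>u\<^sub>i\<close>, \<open>i \<in> E\<close>,
  of an orthogonal \<open>U\<close> (see \<open>Pg_inner_eq_proj_inner\<close>).\<close>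
definition proj_inner :: "nat \<Rightarrow> rmat \<Rightarrow> nat set \<Rightarrow> rmat \<Rightarrow> nat \<Rightarrow> nat \<Rightarrow> real" where
  "proj_inner n U E G j l = (\<Sum>i\<in>E. gdotu n U G j i * gdotu n U G l i)"

lemma gdotu_measurable [measurable]: "(\<lambda>G. gdotu n U G j i) \<in> borel_measurable (gauss_meas s n)"
  unfolding gdotu_def by measurable

lemma proj_inner_measurable [measurable]:
  "(\<lambda>G. proj_inner n U E G j l) \<in> borel_measurable (gauss_meas s n)"
  unfolding proj_inner_def by measurable

lemma gdotu_moments:
  assumes "j < s" "i < n" "Defs.orthogonal_mat n U"
  shows "integrable (gauss_meas s n) (\<lambda>G. (gdotu n U G j i)\<^sup>2)"
    and "integral\<^sup>L (gauss_meas s n) (\<lambda>G. (gdotu n U G j i)\<^sup>2) = 1"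
  unfolding gauss_meas_eq_std_gaussian gdotu_eq_lin_form[OF assms(1)]
  using lin_form_moments[of "{..<s}\<times>{..<n}"] dot_on_gdotu_coeff[OF assms(1,1,3,2,2)] by auto

lemma gdotu_isserlis:
  assumes "j < s" "l < s" "Defs.orthogonal_mat n U" "i < n" "i' < n"
  shows "integrable (gauss_meas s n)
      (\<lambda>G. gdotu n U G j i * gdotu n U G l i * gdotu n U G j i' * gdotu n U G l i')"
    and "integral\<^sup>L (gauss_meas s n)
      (\<lambda>G. gdotu n U G j i * gdotu n U G l i * gdotu n U G j i' * gdotu n U G l i') =
      (if j = l then 1 else 0) + (if i = i' then 1 else 0) + (if j = l \<and> i = i' then 1 else 0)"
  unfolding gauss_meas_eq_std_gaussian gdotu_eq_lin_form[OF assms(1)] gdotu_eq_lin_form[OF assms(2)]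
  using lin_form_isserlis[of "{..<s}\<times>{..<n}"] by (auto simp: dot_on_gdotu_coeff assms)

lemma proj_inner_square_moments:
  assumes j: "j < s" and l: "l < s" and U: "Defs.orthogonal_mat n U" and E: "E \<subseteq> {..<n}"
  shows "integrable (gauss_meas s n) (\<lambda>G. (proj_inner n U E G j l)\<^sup>2)"
    and "integral\<^sup>L (gauss_meas s n) (\<lambda>G. (proj_inner n U E G j l)\<^sup>2) =
      (if j = l then (card E)\<^sup>2 + 2 * card E else card E)"
proof -
  let ?h = "\<lambda>G i i'. gdotu n U G j i * gdotu n U G l i * gdotu n U G j i' * gdotu n U G l i'"
  have fE: "finite E" using E finite_subset by blast
  have sq: "(proj_inner n U E G j l)\<^sup>2 = (\<Sum>i\<in>E. \<Sum>i'\<in>E. ?h G i i')" for G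
    unfolding proj_inner_def power2_eq_square sum_product by (simp add: algebra_simps)
  have int: "integrable (gauss_meas s n) (\<lambda>G. ?h G i i')" if "i \<in> E" "i' \<in> E" for i i'
    using gdotu_isserlis(1)[OF j l U] that E by auto
  show "integrable (gauss_meas s n) (\<lambda>G. (proj_inner n U E G j l)\<^sup>2)"
    unfolding sq using int by (intro Bochner_Integration.integrable_sum) auto
  have "integral\<^sup>L (gauss_meas s n) (\<lambda>G. (proj_inner n U E G j l)\<^sup>2) =
      (\<Sum>i\<in>E. \<Sum>i'\<in>E. integral\<^sup>L (gauss_meas s n) (\<lambda>G. ?h G i i'))"
    unfolding sq using int
    by (subst Bochner_Integration.integral_sum)
       (auto intro!: Bochner_Integration.integrable_sum sum.cong Bochner_Integration.integral_sum)
  also have "\<dots> = (\<Sum>i\<in>E. \<Sum>i'\<in>E. (if j = l then 1 else 0) + (if i = i' then 1 else 0) +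
      (if j = l \<and> i = i' then 1 else 0))"
  proof (intro sum.cong refl)
    fix i i' assume "i \<in> E" "i' \<in> E"
    then have "i < n" "i' < n" using E by auto
    then show "integral\<^sup>L (gauss_meas s n) (\<lambda>G. ?h G i i') = (if j = l then 1 else 0) +
        (if i = i' then 1 else 0) + (if j = l \<and> i = i' then 1 else 0)"
      by (rule gdotu_isserlis(2)[OF j l U])
  qed
  also have "\<dots> = (if j = l then (card E)\<^sup>2 + 2 * card E else card E)"
    using fE by (simp add: sum.distrib power2_eq_square algebra_simps)
  finally show "integral\<^sup>L (gauss_meas s n) (\<lambda>G. (proj_inner n U E G j l)\<^sup>2) =
      (if j = l then (card E)\<^sup>2 + 2 * card E else card E)" .
qed

lemma proj_inner_diag_variance:
  assumes j: "j < s" and U: "Defs.orthogonal_mat n U" and E: "E \<subseteq> {..<n}"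
  shows "integrable (gauss_meas s n) (\<lambda>G. (proj_inner n U E G j j - card E)\<^sup>2)"
    and "integral\<^sup>L (gauss_meas s n) (\<lambda>G. (proj_inner n U E G j j - card E)\<^sup>2) = 2 * card E"
proof -
  interpret prob_space "gauss_meas s n" by (rule prob_space_gauss_meas)
  have int1: "integrable (gauss_meas s n) (\<lambda>G. proj_inner n U E G j j)"
    unfolding proj_inner_def
    by (intro Bochner_Integration.integrable_sum)
       (use gdotu_moments(1)[OF j _ U] E in \<open>auto simp: power2_eq_square\<close>)
  have mean: "integral\<^sup>L (gauss_meas s n) (\<lambda>G. proj_inner n U E G j j) = card E"
    unfolding proj_inner_def using gdotu_moments[OF j _ U] E
    by (subst Bochner_Integration.integral_sum) (auto simp: power2_eq_square subset_eq)
  note int2 = proj_inner_square_moments[OF j j U E]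
  have eq: "(proj_inner n U E G j j - card E)\<^sup>2 =
      (proj_inner n U E G j j)\<^sup>2 - 2 * card E * proj_inner n U E G j j + (card E)\<^sup>2" for G
    by (simp add: power2_eq_square algebra_simps)
  show "integrable (gauss_meas s n) (\<lambda>G. (proj_inner n U E G j j - card E)\<^sup>2)"
    unfolding eq using int1 int2 by auto
  show "integral\<^sup>L (gauss_meas s n) (\<lambda>G. (proj_inner n U E G j j - card E)\<^sup>2) = 2 * card E"
    unfolding eq using int1 int2 mean by (simp add: power2_eq_square algebra_simps prob_space)
qed

lemma prob_gdotu_square_ge:
  assumes j: "j < s" and i: "i < n" and U: "Defs.orthogonal_mat n U" and a: "a > 0"
  shows "measure (gauss_meas s n) {G \<in> space (gauss_meas s n). a \<le> (gdotu n U G j i)\<^sup>2}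
    \<le> sqrt 2 * exp (- a / 4)"
  unfolding gauss_meas_eq_std_gaussian gdotu_eq_lin_form[OF j]
  by (rule lin_form_square_tail) (simp_all add: dot_on_gdotu_coeff[OF j j U i i] a)

lemma prob_proj_inner_diag_far:
  assumes j: "j < s" and U: "Defs.orthogonal_mat n U" and E: "E \<subseteq> {..<n}" and a: "a > 0"
  shows "measure (gauss_meas s n)
      {G \<in> space (gauss_meas s n). a \<le> (proj_inner n U E G j j - card E)\<^sup>2} \<le> 2 * card E / a"
  using integral_Markov_inequality_measure[OF proj_inner_diag_variance(1)[OF j U E],
      where A="space (gauss_meas s n)" and c=a] a
  unfolding proj_inner_diag_variance(2)[OF j U E] by simp

lemma prob_offdiag_sum_ge:
  assumes U: "Defs.orthogonal_mat n U" and T: "finite T"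
    and E: "\<And>t. t \<in> T \<Longrightarrow> E t \<subseteq> {..<n} \<and> card (E t) = k" and a: "a > 0"
  shows "measure (gauss_meas s n) {G \<in> space (gauss_meas s n).
      a \<le> (\<Sum>t\<in>T. \<Sum>j<s. \<Sum>l\<in>{..<s}-{j}. (proj_inner n U (E t) G j l)\<^sup>2)}
    \<le> card T * s * s * k / a"
proof -
  define X where "X G = (\<Sum>t\<in>T. \<Sum>j<s. \<Sum>l\<in>{..<s}-{j}. (proj_inner n U (E t) G j l)\<^sup>2)" for G
  have int: "integrable (gauss_meas s n) (\<lambda>G. (proj_inner n U (E t) G j l)\<^sup>2)"
    and mom: "integral\<^sup>L (gauss_meas s n) (\<lambda>G. (proj_inner n U (E t) G j l)\<^sup>2) = k"
    if "t \<in> T" "j < s" "l \<in> {..<s}-{j}" for t j l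
    using proj_inner_square_moments[OF _ _ U, of j s l "E t"] E[OF that(1)] that by auto
  have int_j: "integrable (gauss_meas s n) (\<lambda>G. \<Sum>l\<in>{..<s}-{j}. (proj_inner n U (E t) G j l)\<^sup>2)"
    if "t \<in> T" "j < s" for t j
    using int that by (intro Bochner_Integration.integrable_sum) auto
  have int_t: "integrable (gauss_meas s n)
      (\<lambda>G. \<Sum>j<s. \<Sum>l\<in>{..<s}-{j}. (proj_inner n U (E t) G j l)\<^sup>2)" if "t \<in> T" for t
    by (rule Bochner_Integration.integrable_sum) (use int_j that in auto)
  have int_X: "integrable (gauss_meas s n) X"
    unfolding X_def by (rule Bochner_Integration.integrable_sum) (use int_t in auto)
  have mean_X: "integral\<^sup>L (gauss_meas s n) X \<le> card T * s * s * k"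
  proof -
    have "integral\<^sup>L (gauss_meas s n) X = (\<Sum>t\<in>T. \<Sum>j<s. \<Sum>l\<in>{..<s}-{j}.
        integral\<^sup>L (gauss_meas s n) (\<lambda>G. (proj_inner n U (E t) G j l)\<^sup>2))"
      unfolding X_def using int int_j int_t
      by (simp add: Bochner_Integration.integral_sum)
    also have "\<dots> = (\<Sum>t\<in>T. \<Sum>j<s. \<Sum>l\<in>{..<s}-{j}. real k)"
      using mom by (intro sum.cong refl) auto
    also have "\<dots> \<le> (\<Sum>t\<in>T. \<Sum>j<s. \<Sum>l<s. real k)"
      by (intro sum_mono sum_mono2) auto
    finally show ?thesis by simp
  qed
  have "AE G in gauss_meas s n. 0 \<le> X G"
    unfolding X_def by (intro AE_I2 sum_nonneg) auto
  then have "measure (gauss_meas s n) {G \<in> space (gauss_meas s n). a \<le> X G}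
      \<le> integral\<^sup>L (gauss_meas s n) X / a"
    using integral_Markov_inequality_measure[OF int_X, where A="space (gauss_meas s n)"] a by simp
  also have "\<dots> \<le> card T * s * s * k / a"
    using mean_X a by (intro divide_right_mono) auto
  finally show ?thesis unfolding X_def .
qed

lemma prob_exists_gdotu_square_ge:
  assumes i: "i < n" and U: "Defs.orthogonal_mat n U" and a: "a > 0"
  shows "measure (gauss_meas s n) (\<Union>j<s. {G \<in> space (gauss_meas s n). a \<le> (gdotu n U G j i)\<^sup>2})
    \<le> real s * sqrt 2 * exp (- a / 4)"
proof -
  interpret prob_space "gauss_meas s n" by (rule prob_space_gauss_meas)
  have "prob (\<Union>j<s. {G \<in> space (gauss_meas s n). a \<le> (gdotu n U G j i)\<^sup>2})
      \<le> (\<Sum>j<s. prob {G \<in> space (gauss_meas s n). a \<le> (gdotu n U G j i)\<^sup>2})"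
    by (rule finite_measure_subadditive_finite) auto
  also have "\<dots> \<le> (\<Sum>j<s. sqrt 2 * exp (- a / 4))"
    by (intro sum_mono prob_gdotu_square_ge[OF _ i U a]) auto
  finally show ?thesis by simp
qed

lemma prob_exists_proj_inner_diag_far:
  assumes U: "Defs.orthogonal_mat n U" and T: "finite T"
    and E: "\<And>t. t \<in> T \<Longrightarrow> E t \<subseteq> {..<n} \<and> card (E t) = k" and a: "a > 0"
  shows "measure (gauss_meas s n) (\<Union>j<s. \<Union>t\<in>T.
      {G \<in> space (gauss_meas s n). a \<le> (proj_inner n U (E t) G j j - k)\<^sup>2})
    \<le> real s * card T * (2 * real k / a)"
proof -
  interpret prob_space "gauss_meas s n" by (rule prob_space_gauss_meas)
  define Far where "Far j t = {G \<in> space (gauss_meas s n). a \<le> (proj_inner n U (E t) G j j - k)\<^sup>2}"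
    for j t
  have Far_events: "Far j t \<in> events" for j t
    unfolding Far_def by measurable
  have "prob (\<Union>j<s. \<Union>t\<in>T. Far j t) \<le> (\<Sum>j<s. prob (\<Union>t\<in>T. Far j t))"
    by (rule finite_measure_subadditive_finite) (use T Far_events in auto)
  also have "\<dots> \<le> (\<Sum>j<s. \<Sum>t\<in>T. prob (Far j t))"
    by (rule sum_mono, rule finite_measure_subadditive_finite[OF T]) (use Far_events in auto)
  also have "\<dots> \<le> (\<Sum>j<s. \<Sum>t\<in>T. 2 * real k / a)"
  proof (intro sum_mono)
    fix j t assume j: "j \<in> {..<s}" and t: "t \<in> T"
    have "prob {G \<in> space (gauss_meas s n). a \<le> (proj_inner n U (E t) G j j - card (E t))\<^sup>2}
        \<le> 2 * card (E t) / a"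
      using j E[OF t] by (intro prob_proj_inner_diag_far[OF _ U _ a]) auto
    then show "prob (Far j t) \<le> 2 * real k / a" unfolding Far_def using E[OF t] by simp
  qed
  finally show ?thesis unfolding Far_def by simp
qed

section \<open>Eigenspace projections of the hard instance\<close>

abbreviation eigen_indices :: "real \<Rightarrow> nat \<Rightarrow> nat \<Rightarrow> nat \<Rightarrow> nat \<Rightarrow> nat set" where
  "eigen_indices \<epsilon> r k n t \<equiv> {i. i < n \<and> Ddiag \<epsilon> r k i = lam \<epsilon> r t}"

lemma lam_eq_imp_eq:
  assumes r: "r \<ge> 1" and t: "2 \<le> t" "t \<le> r + 2" and t': "2 \<le> t'" "t' \<le> r + 2"
    and eq: "lam \<epsilon> r t = lam \<epsilon> r t'"
  shows "t = t'"
proof -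
  have angle: "0 \<le> real (u - 2) / real r * pi \<and> real (u - 2) / real r * pi \<le> pi"
    if "2 \<le> u" "u \<le> r + 2" for u
  proof -
    have "real (u - 2) / real r \<le> 1" using that r by simp
    then have "real (u - 2) / real r * pi \<le> 1 * pi" by (intro mult_right_mono) auto
    then show ?thesis by simp
  qed
  have "cos (real (t - 2) / real r * pi) = cos (real (t' - 2) / real r * pi)"
    using eq t t' by (simp add: lam_def)
  then have "real (t - 2) / real r * pi = real (t' - 2) / real r * pi"
    using cos_inj_pi angle[OF t] angle[OF t'] by blast
  then show ?thesis using t t' r by (simp add: field_simps)
qed

lemma ceiling_divide_eq_iff:
  fixes i k c :: nat
  assumes "k > 0" "c \<ge> 1"
  shows "\<lceil>real i / real k\<rceil> = int c \<longleftrightarrow> (c - 1) * k < i \<and> i \<le> c * k"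
proof -
  have "\<lceil>real i / real k\<rceil> = int c \<longleftrightarrow> (real c - 1) * real k < real i \<and> real i \<le> real c * real k"
    using assms by (simp add: ceiling_eq_iff field_simps)
  also have "\<dots> \<longleftrightarrow> real ((c - 1) * k) < real i \<and> real i \<le> real (c * k)"
    using assms by (simp add: of_nat_diff)
  finally show ?thesis by (simp only: of_nat_less_iff of_nat_le_iff)
qed

lemma eigen_indices_eq:
  assumes r: "r \<ge> 1" and k: "k > 0" and n: "n = k * (r + 1) + 1" and \<epsilon>: "\<epsilon> > 0"
    and t: "2 \<le> t" "t \<le> r + 2"
  shows "eigen_indices \<epsilon> r k n t = {(t - 2) * k <.. (t - 1) * k}"
proof (intro equalityI subsetI)
  fix i assume "i \<in> eigen_indices \<epsilon> r k n t"
  then have i: "i < n" and D: "Ddiag \<epsilon> r k i = lam \<epsilon> r t" by auto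
  have "lam \<epsilon> r t \<le> 1" using t by (simp add: lam_def)
  then have "lam \<epsilon> r t \<noteq> lam \<epsilon> r 1" using \<epsilon> by (simp add: lam_def)
  have i0: "i \<noteq> 0"
  proof
    assume "i = 0"
    then have "Ddiag \<epsilon> r k i = lam \<epsilon> r 1" by (simp add: Ddiag_def)
    with D \<open>lam \<epsilon> r t \<noteq> lam \<epsilon> r 1\<close> show False by simp
  qed
  define c where "c = nat \<lceil>real i / real k\<rceil>"
  have "\<lceil>real i / real k\<rceil> \<ge> 1" using i0 k by (simp add: le_ceiling_iff)
  then have c: "\<lceil>real i / real k\<rceil> = int c" "c \<ge> 1"
    unfolding c_def by linarith+
  have "i \<le> k * (r + 1)" using i n by simp
  then have "real i \<le> real k * real (r + 1)" by (metis of_nat_le_iff of_nat_mult)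
  then have "c \<le> r + 1" using k unfolding c_def by (simp add: ceiling_le_iff nat_le_iff field_simps)
  moreover have "lam \<epsilon> r (1 + c) = lam \<epsilon> r t" using D i0 unfolding Ddiag_def c_def by simp
  ultimately have "1 + c = t" using lam_eq_imp_eq[OF r _ _ t] c(2) by simp
  then show "i \<in> {(t - 2) * k <.. (t - 1) * k}"
    using ceiling_divide_eq_iff[OF k c(2), of i] c(1) by (auto simp: numeral_2_eq_2)
next
  fix i assume "i \<in> {(t - 2) * k <.. (t - 1) * k}"
  then have i: "(t - 1 - 1) * k < i" "i \<le> (t - 1) * k" by (auto simp: numeral_2_eq_2)
  then have "\<lceil>real i / real k\<rceil> = int (t - 1)" using ceiling_divide_eq_iff[OF k, of "t - 1" i] t by simp
  then have "1 + nat \<lceil>real i / real k\<rceil> = t" using t by simp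
  moreover have "(t - 1) * k \<le> (r + 1) * k" using t by (intro mult_right_mono) auto
  then have "i < n" using i n by (simp add: algebra_simps)
  moreover have "i \<noteq> 0" using i by auto
  ultimately show "i \<in> eigen_indices \<epsilon> r k n t" using t by (simp add: Ddiag_def)
qed

lemma card_eigen_indices:
  assumes "r \<ge> 1" "k > 0" "n = k * (r + 1) + 1" "\<epsilon> > 0" "2 \<le> t" "t \<le> r + 2"
  shows "card (eigen_indices \<epsilon> r k n t) = k"
proof -
  have "(t - 1) * k - (t - 2) * k = k" using assms(5) by (simp add: diff_mult_distrib[symmetric])
  then show ?thesis unfolding eigen_indices_eq[OF assms] by simp
qed

lemma sum_orthonormal_combinations:
  assumes U: "Defs.orthogonal_mat n U" and E: "E \<subseteq> {..<n}"
  shows "(\<Sum>m<n. (\<Sum>i\<in>E. a i * U (m,i)) * (\<Sum>i\<in>E. b i * U (m,i))) = (\<Sum>i\<in>E. a i * b i)"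
proof -
  have fE: "finite E" using E finite_subset by blast
  have "(\<Sum>m<n. (\<Sum>i\<in>E. a i * U (m,i)) * (\<Sum>i\<in>E. b i * U (m,i))) =
        (\<Sum>m<n. \<Sum>i\<in>E. \<Sum>i'\<in>E. a i * b i' * (U (m,i) * U (m,i')))"
    by (simp add: sum_product algebra_simps)
  also have "\<dots> = (\<Sum>i\<in>E. \<Sum>i'\<in>E. a i * b i' * (\<Sum>m<n. U (m,i) * U (m,i')))"
    by (simp add: sum.swap[of _ "{..<n}"] sum_distrib_left)
  also have "\<dots> = (\<Sum>i\<in>E. \<Sum>i'\<in>E. if i = i' then a i * b i' else 0)"
  proof (intro sum.cong refl)
    fix i i' assume "i \<in> E" "i' \<in> E"
    then have "i < n" "i' < n" using E by auto
    then have "(\<Sum>m<n. U (m,i) * U (m,i')) = (if i = i' then 1 else 0)"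
      using U unfolding Defs.orthogonal_mat_def by blast
    then show "a i * b i' * (\<Sum>m<n. U (m,i) * U (m,i')) = (if i = i' then a i * b i' else 0)"
      by simp
  qed
  also have "\<dots> = (\<Sum>i\<in>E. a i * b i)" using fE by simp
  finally show ?thesis .
qed

lemma Pg_inner_eq_proj_inner:
  assumes "Defs.orthogonal_mat n U"
  shows "(\<Sum>m<n. Pg \<epsilon> r k n U G t j m * Pg \<epsilon> r k n U G t l m) =
    proj_inner n U (eigen_indices \<epsilon> r k n t) G j l"
  unfolding Pg_def proj_inner_def by (rule sum_orthonormal_combinations[OF assms]) auto

lemma acoef_eq_sqrt_proj_inner:
  assumes "Defs.orthogonal_mat n U"
  shows "acoef \<epsilon> r k n U G t j = sqrt (proj_inner n U (eigen_indices \<epsilon> r k n t) G j j)"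
  unfolding acoef_def power2_eq_square Pg_inner_eq_proj_inner[OF assms] ..

lemma Vmat_gram_eq:
  assumes "Defs.orthogonal_mat n U" "j < s" "l < s"
  shows "(\<Sum>i<n. Vmat \<epsilon> r k n s U G t (i,j) * Vmat \<epsilon> r k n s U G t (i,l)) =
    proj_inner n U (eigen_indices \<epsilon> r k n t) G j l / (acoef \<epsilon> r k n U G t j * acoef \<epsilon> r k n U G t l)"
proof -
  have "(\<Sum>i<n. Vmat \<epsilon> r k n s U G t (i,j) * Vmat \<epsilon> r k n s U G t (i,l)) =
     (\<Sum>i<n. Pg \<epsilon> r k n U G t j i * Pg \<epsilon> r k n U G t l i) /
        (acoef \<epsilon> r k n U G t j * acoef \<epsilon> r k n U G t l)"
    unfolding sum_divide_distrib using assms(2,3) by (intro sum.cong refl) (auto simp: Vmat_def)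
  then show ?thesis unfolding Pg_inner_eq_proj_inner[OF assms(1)] .
qed

lemma sqrt_bounds_of_sq_dist:
  fixes x k :: real
  assumes "(x - k)\<^sup>2 < 9 * k\<^sup>2 / 16" "k \<ge> 0"
  shows "0.5 * sqrt k \<le> sqrt x" "sqrt x \<le> 2 * sqrt k"
proof -
  have "\<bar>x - k\<bar>\<^sup>2 < (3 * k / 4)\<^sup>2"
    using assms(1) by (simp add: power_divide power_mult_distrib)
  then have "\<bar>x - k\<bar> < 3 * k / 4" by (rule power2_less_imp_less) (use assms(2) in simp)
  then have x: "k / 4 < x" "x < 7 * k / 4" unfolding abs_less_iff by linarith+
  have "0.5 * sqrt k = sqrt (k / 4)" by (simp add: real_sqrt_divide)
  then show "0.5 * sqrt k \<le> sqrt x" using x by simp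
  have "sqrt x \<le> sqrt (4 * k)" using x by simp
  then show "sqrt x \<le> 2 * sqrt k" by (simp add: real_sqrt_mult)
qed

lemma Vmat_gram_diag:
  assumes U: "Defs.orthogonal_mat n U" and j: "j < s" and pos: "acoef \<epsilon> r k n U G t j > 0"
  shows "(\<Sum>i<n. Vmat \<epsilon> r k n s U G t (i,j) * Vmat \<epsilon> r k n s U G t (i,j)) = 1"
proof -
  have "proj_inner n U (eigen_indices \<epsilon> r k n t) G j j \<ge> 0"
    unfolding proj_inner_def by (auto intro: sum_nonneg)
  then have "proj_inner n U (eigen_indices \<epsilon> r k n t) G j j = acoef \<epsilon> r k n U G t j * acoef \<epsilon> r k n U G t j"
    unfolding acoef_eq_sqrt_proj_inner[OF U] by simp
  then show ?thesis unfolding Vmat_gram_eq[OF U j j] using pos by simp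
qed

lemma Vmat_gram_offdiag_sq_le:
  assumes U: "Defs.orthogonal_mat n U" and j: "j < s" and l: "l < s" and k: "k > 0"
    and aj: "0.5 * sqrt k \<le> acoef \<epsilon> r k n U G t j" and al: "0.5 * sqrt k \<le> acoef \<epsilon> r k n U G t l"
  shows "(\<Sum>i<n. Vmat \<epsilon> r k n s U G t (i,j) * Vmat \<epsilon> r k n s U G t (i,l))\<^sup>2
    \<le> 16 * (proj_inner n U (eigen_indices \<epsilon> r k n t) G j l)\<^sup>2 / (real k)\<^sup>2"
proof -
  have "0 \<le> 0.5 * sqrt (real k)" by simp
  then have "0 \<le> acoef \<epsilon> r k n U G t j" using aj by linarith
  then have "(0.5 * sqrt k) * (0.5 * sqrt k) \<le> acoef \<epsilon> r k n U G t j * acoef \<epsilon> r k n U G t l"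
    by (rule mult_mono[OF aj al]) simp
  then have le: "(real k / 4)\<^sup>2 \<le> (acoef \<epsilon> r k n U G t j * acoef \<epsilon> r k n U G t l)\<^sup>2"
    using k by (intro power_mono) auto
  have "(\<Sum>i<n. Vmat \<epsilon> r k n s U G t (i,j) * Vmat \<epsilon> r k n s U G t (i,l))\<^sup>2 =
      (proj_inner n U (eigen_indices \<epsilon> r k n t) G j l)\<^sup>2 /
      (acoef \<epsilon> r k n U G t j * acoef \<epsilon> r k n U G t l)\<^sup>2"
    unfolding Vmat_gram_eq[OF U j l] by (simp add: power_divide)
  also have "\<dots> \<le> (proj_inner n U (eigen_indices \<epsilon> r k n t) G j l)\<^sup>2 / (real k / 4)\<^sup>2"
  proof -
    have "0 < (real k / 4)\<^sup>2" using k by simp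
    then show ?thesis using le by (intro divide_left_mono mult_pos_pos) auto
  qed
  also have "\<dots> = 16 * (proj_inner n U (eigen_indices \<epsilon> r k n t) G j l)\<^sup>2 / (real k)\<^sup>2"
    by (simp add: power_divide)
  finally show ?thesis .
qed

lemma Vmat_singular_value_bounds:
  assumes U: "Defs.orthogonal_mat n U" and k: "k > 0"
    and norms: "\<And>j. j < s \<Longrightarrow> 0.5 * sqrt k \<le> acoef \<epsilon> r k n U G t j"
    and cross: "(\<Sum>j<s. \<Sum>l\<in>{..<s}-{j}. (proj_inner n U (eigen_indices \<epsilon> r k n t) G j l)\<^sup>2)
      \<le> (real k)\<^sup>2 / 64"
    and sv: "singular_value n s (Vmat \<epsilon> r k n s U G t) \<sigma>"
  shows "1/4 \<le> \<sigma> \<and> \<sigma> \<le> 4"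
proof (rule singular_value_bounds_of_gram[OF _ _ sv])
  let ?V = "Vmat \<epsilon> r k n s U G t"
  let ?B = "proj_inner n U (eigen_indices \<epsilon> r k n t) G"
  show "\<forall>j<s. (\<Sum>i<n. ?V (i,j) * ?V (i,j)) = 1"
  proof (intro allI impI)
    fix j assume j: "j < s"
    have "0 < 0.5 * sqrt (real k)" using k by simp
    then have "acoef \<epsilon> r k n U G t j > 0" using norms[OF j] by linarith
    then show "(\<Sum>i<n. ?V (i,j) * ?V (i,j)) = 1" by (rule Vmat_gram_diag[OF U j])
  qed
  have "(\<Sum>j<s. \<Sum>l\<in>{..<s}-{j}. (\<Sum>i<n. ?V (i,j) * ?V (i,l))\<^sup>2)
      \<le> (\<Sum>j<s. \<Sum>l\<in>{..<s}-{j}. 16 * (?B j l)\<^sup>2 / (real k)\<^sup>2)"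
    using Vmat_gram_offdiag_sq_le[OF U _ _ k] norms by (intro sum_mono) auto
  also have "\<dots> = 16 / (real k)\<^sup>2 * (\<Sum>j<s. \<Sum>l\<in>{..<s}-{j}. (?B j l)\<^sup>2)"
    by (simp add: sum_distrib_left)
  also have "\<dots> \<le> 16 / (real k)\<^sup>2 * ((real k)\<^sup>2 / 64)"
    using cross by (intro mult_left_mono) auto
  also have "\<dots> = 1/4" using k by simp
  finally show "(\<Sum>j<s. \<Sum>l\<in>{..<s}-{j}. (\<Sum>i<n. ?V (i,j) * ?V (i,l))\<^sup>2) \<le> 1/4" .
qed

lemma good_event_if_statistics_close:
  assumes U: "Defs.orthogonal_mat n U" and k: "k > 0"
    and gauss_small: "\<forall>j<s. (gdotu n U G j 0)\<^sup>2 < 25 * ln (real n)"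
    and norms_close: "\<forall>j<s. \<forall>t\<in>{2..r+2}.
      (proj_inner n U (eigen_indices \<epsilon> r k n t) G j j - k)\<^sup>2 < 9 * (real k)\<^sup>2 / 16"
    and cross_small: "(\<Sum>t\<in>{2..r+2}. \<Sum>j<s. \<Sum>l\<in>{..<s}-{j}.
      (proj_inner n U (eigen_indices \<epsilon> r k n t) G j l)\<^sup>2) < (real k)\<^sup>2 / 64"
  shows "good_event \<epsilon> n r s k U G"
proof -
  let ?a = "acoef \<epsilon> r k n U G"
  let ?B = "\<lambda>t. proj_inner n U (eigen_indices \<epsilon> r k n t) G"
  have first: "\<bar>gdotu n U G j 0\<bar> \<le> 5 * sqrt (ln (real n))" if "j < s" for j
  proof -
    have "\<bar>gdotu n U G j 0\<bar> \<le> sqrt (25 * ln (real n))"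
      using gauss_small that real_sqrt_le_mono[of "(gdotu n U G j 0)\<^sup>2"] by fastforce
    then show ?thesis by (simp add: real_sqrt_mult)
  qed
  have norms: "0.5 * sqrt (real k) \<le> ?a t j \<and> ?a t j \<le> 2 * sqrt (real k)"
    if "j < s" "t \<in> {2..r+2}" for j t
    using sqrt_bounds_of_sq_dist[of "?B t j j" k] norms_close that
    unfolding acoef_eq_sqrt_proj_inner[OF U] by auto
  have "(\<Sum>j<s. \<Sum>l\<in>{..<s}-{j}. (?B t j l)\<^sup>2) \<le> (real k)\<^sup>2 / 64" if "t \<in> {2..r+2}" for t
  proof -
    have "(\<Sum>j<s. \<Sum>l\<in>{..<s}-{j}. (?B t j l)\<^sup>2)
        \<le> (\<Sum>t\<in>{2..r+2}. \<Sum>j<s. \<Sum>l\<in>{..<s}-{j}. (?B t j l)\<^sup>2)"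
      using that by (intro member_le_sum) (auto intro!: sum_nonneg)
    then show ?thesis using cross_small by linarith
  qed
  then have "1/4 \<le> \<sigma> \<and> \<sigma> \<le> 4"
    if "t \<in> {2..r+2}" "singular_value n s (Vmat \<epsilon> r k n s U G t) \<sigma>" for t \<sigma>
    using Vmat_singular_value_bounds[OF U k] norms that by blast
  then show ?thesis unfolding good_event_def using first norms by blast
qed

section \<open>Measurability of the good event\<close>

lemma exists_root_if_approximate_roots:
  fixes g :: "real \<Rightarrow> real"
  assumes cont: "continuous_on {a..b} g" and approx: "\<And>N. \<exists>q\<in>{a..b}. \<bar>g q\<bar> < 1 / Suc N"
  shows "\<exists>\<sigma>\<in>{a..b}. g \<sigma> = 0"
proof -
  have "{a..b} \<noteq> {}" using approx by blast
  then obtain x where x: "x \<in> {a..b}" and min: "\<forall>y\<in>{a..b}. \<bar>g x\<bar> \<le> \<bar>g y\<bar>"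
    using continuous_attains_inf[OF compact_Icc _ continuous_on_rabs[OF cont]] by blast
  have "g x = 0"
  proof (rule ccontr)
    assume "g x \<noteq> 0"
    then have "\<bar>g x\<bar> > 0" by simp
    then obtain N where "inverse (real (Suc N)) < \<bar>g x\<bar>" using reals_Archimedean by blast
    moreover obtain q where "q \<in> {a..b}" "\<bar>g q\<bar> < 1 / Suc N" using approx by blast
    ultimately show False using min by (fastforce simp: inverse_eq_divide)
  qed
  then show ?thesis using x by blast
qed

lemma sets_exists_root_in_Icc:
  fixes f :: "'a \<Rightarrow> real \<Rightarrow> real"
  assumes meas: "\<And>\<sigma>. (\<lambda>\<omega>. f \<omega> \<sigma>) \<in> borel_measurable M"
    and cont: "\<And>\<omega>. continuous_on {a..b} (f \<omega>)"
  shows "{\<omega> \<in> space M. \<exists>\<sigma>\<in>{a..b}. f \<omega> \<sigma> = 0} \<in> sets M"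
proof -
  define D where "D = insert b \<rat> \<inter> {a..b}"
  have near: "\<exists>q\<in>D. dist q \<sigma> < \<delta>" if "\<sigma> \<in> {a..b}" "\<delta> > 0" for \<sigma> \<delta>
  proof (cases "\<sigma> = b")
    case False
    then have "\<sigma> < min b (\<sigma> + \<delta>)" using that by auto
    from Rats_dense_in_real[OF this] obtain q where "q \<in> \<rat>" "\<sigma> < q" "q < min b (\<sigma> + \<delta>)" by blast
    then show ?thesis using that unfolding D_def dist_real_def by (intro bexI[of _ q]) auto
  qed (use that in \<open>auto simp: D_def\<close>)
  have eq: "{\<omega> \<in> space M. \<exists>\<sigma>\<in>{a..b}. f \<omega> \<sigma> = 0} =
     (\<Inter>N. \<Union>q\<in>D. {\<omega> \<in> space M. \<bar>f \<omega> q\<bar> < 1 / Suc N})"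
  proof (intro equalityI subsetI)
    fix \<omega> assume "\<omega> \<in> {\<omega> \<in> space M. \<exists>\<sigma>\<in>{a..b}. f \<omega> \<sigma> = 0}"
    then obtain \<sigma> where \<omega>: "\<omega> \<in> space M" and \<sigma>: "\<sigma> \<in> {a..b}" "f \<omega> \<sigma> = 0" by auto
    show "\<omega> \<in> (\<Inter>N. \<Union>q\<in>D. {\<omega> \<in> space M. \<bar>f \<omega> q\<bar> < 1 / Suc N})"
    proof
      fix N :: nat
      obtain \<delta> where "\<delta> > 0" and \<delta>: "\<And>x. x \<in> {a..b} \<Longrightarrow> dist x \<sigma> < \<delta> \<Longrightarrow> dist (f \<omega> x) (f \<omega> \<sigma>) < 1 / Suc N"
        using cont[of \<omega>] \<sigma>(1) unfolding continuous_on_iff by (metis of_nat_0_less_iff zero_less_Suc zero_less_divide_1_iff)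
      then obtain q where "q \<in> D" "dist q \<sigma> < \<delta>" using near \<sigma>(1) by blast
      then show "\<omega> \<in> (\<Union>q\<in>D. {\<omega> \<in> space M. \<bar>f \<omega> q\<bar> < 1 / Suc N})"
        using \<delta>[of q] \<sigma> \<omega> by (auto simp: D_def dist_real_def)
    qed
  next
    fix \<omega> assume "\<omega> \<in> (\<Inter>N. \<Union>q\<in>D. {\<omega> \<in> space M. \<bar>f \<omega> q\<bar> < 1 / Suc N})"
    then have "\<omega> \<in> space M" "\<And>N. \<exists>q\<in>{a..b}. \<bar>f \<omega> q\<bar> < 1 / Suc N" by (auto simp: D_def)
    then show "\<omega> \<in> {\<omega> \<in> space M. \<exists>\<sigma>\<in>{a..b}. f \<omega> \<sigma> = 0}"
      using exists_root_if_approximate_roots[OF cont] by blast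
  qed
  have "countable D" unfolding D_def using countable_rat by auto
  show ?thesis unfolding eq
  proof (rule sets.countable_INT)
    show "(\<lambda>N. \<Union>q\<in>D. {\<omega> \<in> space M. \<bar>f \<omega> q\<bar> < 1 / Suc N}) ` UNIV \<subseteq> sets M"
      using meas \<open>countable D\<close> by (auto intro!: sets.countable_UN'')
  qed simp
qed

lemma eigenvector_exists_iff_det_eq_0:
  fixes Q :: "nat \<times> nat \<Rightarrow> real"
  shows "(\<exists>x::nat\<Rightarrow>real. (\<exists>j<q. x j \<noteq> 0) \<and> (\<forall>j<q. (\<Sum>l<q. Q(j,l) * x l) = lm * x j)) \<longleftrightarrow>
         det (mat q q (\<lambda>(j,l). Q(j,l) - (if j = l then lm else 0))) = 0"
proof -
  let ?A = "mat q q (\<lambda>(j,l). Q(j,l) - (if j = l then lm else 0))"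
  have mult: "(?A *\<^sub>v v) $ j = (\<Sum>l<q. Q(j,l) * v $ l) - lm * v $ j" if "j < q" "dim_vec v = q" for v j
  proof -
    have "(?A *\<^sub>v v) $ j = (\<Sum>l<q. Q(j,l) * v $ l - (if j = l then lm * v $ l else 0))"
      using that by (auto simp: scalar_prod_def algebra_simps atLeast0LessThan intro!: sum.cong)
    then show ?thesis using that by (simp add: sum_subtractf)
  qed
  have "(\<exists>x::nat\<Rightarrow>real. (\<exists>j<q. x j \<noteq> 0) \<and> (\<forall>j<q. (\<Sum>l<q. Q(j,l) * x l) = lm * x j)) \<longleftrightarrow>
        (\<exists>v. v \<in> carrier_vec q \<and> v \<noteq> 0\<^sub>v q \<and> ?A *\<^sub>v v = 0\<^sub>v q)"
  proof
    assume "\<exists>x::nat\<Rightarrow>real. (\<exists>j<q. x j \<noteq> 0) \<and> (\<forall>j<q. (\<Sum>l<q. Q(j,l) * x l) = lm * x j)"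
    then obtain x where nz: "\<exists>j<q. x j \<noteq> 0" and ev: "\<forall>j<q. (\<Sum>l<q. Q(j,l) * x l) = lm * x j"
      by blast
    have "vec q x \<noteq> 0\<^sub>v q" using nz by (metis index_vec index_zero_vec(1))
    moreover have "?A *\<^sub>v vec q x = 0\<^sub>v q"
      using mult ev by (intro eq_vecI) auto
    ultimately show "\<exists>v. v \<in> carrier_vec q \<and> v \<noteq> 0\<^sub>v q \<and> ?A *\<^sub>v v = 0\<^sub>v q"
      by (intro exI[of _ "vec q x"]) simp
  next
    assume "\<exists>v. v \<in> carrier_vec q \<and> v \<noteq> 0\<^sub>v q \<and> ?A *\<^sub>v v = 0\<^sub>v q"
    then obtain v where v: "v \<in> carrier_vec q" "v \<noteq> 0\<^sub>v q" "?A *\<^sub>v v = 0\<^sub>v q" by blast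
    then have dim: "dim_vec v = q" by simp
    have "\<exists>j<q. v $ j \<noteq> 0"
    proof (rule ccontr)
      assume "\<not> (\<exists>j<q. v $ j \<noteq> 0)"
      then have "v = 0\<^sub>v q" using dim by (intro eq_vecI) auto
      with v(2) show False by simp
    qed
    moreover have "\<forall>j<q. (\<Sum>l<q. Q(j,l) * v $ l) = lm * v $ j"
    proof (intro allI impI)
      fix j assume "j < q"
      then have "(?A *\<^sub>v v) $ j = 0" using v(3) by simp
      then show "(\<Sum>l<q. Q(j,l) * v $ l) = lm * v $ j" using mult[OF \<open>j < q\<close> dim] by simp
    qed
    ultimately show "\<exists>x::nat\<Rightarrow>real. (\<exists>j<q. x j \<noteq> 0) \<and> (\<forall>j<q. (\<Sum>l<q. Q(j,l) * x l) = lm * x j)"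
      by blast
  qed
  also have "\<dots> \<longleftrightarrow> det ?A = 0"
    using det_0_iff_vec_prod_zero[of ?A q] by simp
  finally show ?thesis .
qed

definition gram_char_det :: "nat \<Rightarrow> nat \<Rightarrow> rmat \<Rightarrow> real \<Rightarrow> real" where
  "gram_char_det p q V \<sigma> =
     det (mat q q (\<lambda>(j,l). (\<Sum>i<p. V(i,j) * V(i,l)) - (if j = l then \<sigma>\<^sup>2 else 0)))"

lemma gram_char_det_eq_sum_permutations:
  "gram_char_det p q V \<sigma> = (\<Sum>\<pi>\<in>{\<pi>. \<pi> permutes {0..<q}}. signof \<pi> *
     (\<Prod>j = 0..<q. (\<Sum>i<p. V(i,j) * V(i,\<pi> j)) - (if j = \<pi> j then \<sigma>\<^sup>2 else 0)))"
  unfolding gram_char_det_def det_def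
  by (auto intro!: sum.cong prod.cong simp: permutes_in_image)

lemma continuous_on_gram_char_det: "continuous_on S (gram_char_det p q V)"
proof -
  have diag: "continuous_on S (\<lambda>\<sigma>::real. if b then \<sigma>\<^sup>2 else 0)" for b
    by (cases b) (auto intro: continuous_intros)
  show ?thesis
    unfolding gram_char_det_eq_sum_permutations by (intro continuous_intros diag)
qed

lemma singular_value_iff_gram_char_det:
  "singular_value p q V \<sigma> \<longleftrightarrow> \<sigma> \<ge> 0 \<and> gram_char_det p q V \<sigma> = 0"
  using eigenvector_exists_iff_det_eq_0[of q "\<lambda>(j,l). \<Sum>i<p. V(i,j) * V(i,l)" "\<sigma>\<^sup>2"]
  unfolding singular_value_def gram_char_det_def by auto

text \<open>Covering the complement of \<open>[1/4, 4]\<close> by countably many compact intervals makes the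
  singular-value condition of \<open>good_event\<close> measurable (via \<open>sets_exists_root_in_Icc\<close>).\<close>
lemma singular_value_outside_iff:
  "(\<exists>\<sigma>. singular_value p q V \<sigma> \<and> \<not> (1/4 \<le> \<sigma> \<and> \<sigma> \<le> 4)) \<longleftrightarrow>
   (\<exists>m::nat. (\<exists>\<sigma>\<in>{0..1/4 - 1/(real m + 5)}. gram_char_det p q V \<sigma> = 0) \<or>
             (\<exists>\<sigma>\<in>{4 + 1/(real m + 1)..real m + 5}. gram_char_det p q V \<sigma> = 0))"
proof
  assume "\<exists>\<sigma>. singular_value p q V \<sigma> \<and> \<not> (1/4 \<le> \<sigma> \<and> \<sigma> \<le> 4)"
  then obtain \<sigma> where sv: "singular_value p q V \<sigma>" and out: "\<sigma> < 1/4 \<or> \<sigma> > 4"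
    by auto
  then have \<sigma>: "\<sigma> \<ge> 0" "gram_char_det p q V \<sigma> = 0"
    unfolding singular_value_iff_gram_char_det by auto
  from out show "\<exists>m::nat. (\<exists>\<sigma>\<in>{0..1/4 - 1/(real m + 5)}. gram_char_det p q V \<sigma> = 0) \<or>
             (\<exists>\<sigma>\<in>{4 + 1/(real m + 1)..real m + 5}. gram_char_det p q V \<sigma> = 0)"
  proof
    assume "\<sigma> < 1/4"
    then obtain m :: nat where m: "inverse (real (Suc m)) < 1/4 - \<sigma>"
      using reals_Archimedean[of "1/4 - \<sigma>"] by auto
    have "1/(real m + 5) \<le> inverse (real (Suc m))" by (simp add: inverse_eq_divide frac_le)
    then have "\<sigma> \<in> {0..1/4 - 1/(real m + 5)}" using m \<sigma>(1) by auto
    then show ?thesis using \<sigma>(2) by blast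
  next
    assume "\<sigma> > 4"
    then obtain m1 :: nat where m1: "inverse (real (Suc m1)) < \<sigma> - 4"
      using reals_Archimedean[of "\<sigma> - 4"] by auto
    obtain m2 :: nat where m2: "\<sigma> < real m2" using reals_Archimedean2 by blast
    have "1/(real (max m1 m2) + 1) \<le> inverse (real (Suc m1))"
      by (simp add: inverse_eq_divide frac_le)
    then have "\<sigma> \<in> {4 + 1/(real (max m1 m2) + 1)..real (max m1 m2) + 5}" using m1 m2 by auto
    then show ?thesis using \<sigma>(2) by blast
  qed
next
  assume "\<exists>m::nat. (\<exists>\<sigma>\<in>{0..1/4 - 1/(real m + 5)}. gram_char_det p q V \<sigma> = 0) \<or>
             (\<exists>\<sigma>\<in>{4 + 1/(real m + 1)..real m + 5}. gram_char_det p q V \<sigma> = 0)"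
  then obtain m :: nat and \<sigma> where root: "gram_char_det p q V \<sigma> = 0"
    and mem: "\<sigma> \<in> {0..1/4 - 1/(real m + 5)} \<or> \<sigma> \<in> {4 + 1/(real m + 1)..real m + 5}"
    by blast
  have "1/(real m + 5) > 0" "1/(real m + 1) > 0" by simp_all
  with mem have "\<sigma> \<ge> 0 \<and> \<not> (1/4 \<le> \<sigma> \<and> \<sigma> \<le> 4)"
    unfolding atLeastAtMost_iff by linarith
  then show "\<exists>\<sigma>. singular_value p q V \<sigma> \<and> \<not> (1/4 \<le> \<sigma> \<and> \<sigma> \<le> 4)"
    using root unfolding singular_value_iff_gram_char_det by blast
qed

lemma sets_good_event:
  assumes [measurable]: "\<And>x. (\<lambda>\<omega>. Uf \<omega> x) \<in> borel_measurable M" "\<And>x. (\<lambda>\<omega>. Gf \<omega> x) \<in> borel_measurable M"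
  shows "{\<omega> \<in> space M. good_event \<epsilon> n r s k (Uf \<omega>) (Gf \<omega>)} \<in> sets M"
proof -
  let ?D = "\<lambda>t \<omega>. gram_char_det n s (Vmat \<epsilon> r k n s (Uf \<omega>) (Gf \<omega>) t)"
  have [measurable]: "(\<lambda>\<omega>. ?D t \<omega> \<sigma>) \<in> borel_measurable M" for t \<sigma>
    unfolding gram_char_det_eq_sum_permutations Vmat_def Pg_def acoef_def gdotu_def
      restrict_apply prod.case by measurable
  define Small where "Small t m = {\<omega> \<in> space M. \<exists>\<sigma>\<in>{0..1/4 - 1/(real m + 5)}. ?D t \<omega> \<sigma> = 0}"
    for t m :: nat
  define Large where "Large t m = {\<omega> \<in> space M. \<exists>\<sigma>\<in>{4 + 1/(real m + 1)..real m + 5}. ?D t \<omega> \<sigma> = 0}"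
    for t m :: nat
  have [measurable]: "Small t m \<in> sets M" "Large t m \<in> sets M" for t m
    unfolding Small_def Large_def
    by (intro sets_exists_root_in_Icc continuous_on_gram_char_det; measurable)+
  have sv: "(\<forall>\<sigma>. singular_value n s V \<sigma> \<longrightarrow> 1/4 \<le> \<sigma> \<and> \<sigma> \<le> 4) \<longleftrightarrow>
      \<not> (\<exists>m::nat. (\<exists>\<sigma>\<in>{0..1/4 - 1/(real m + 5)}. gram_char_det n s V \<sigma> = 0) \<or>
             (\<exists>\<sigma>\<in>{4 + 1/(real m + 1)..real m + 5}. gram_char_det n s V \<sigma> = 0))" for V
    unfolding singular_value_outside_iff[symmetric] by blast
  have "{\<omega> \<in> space M. good_event \<epsilon> n r s k (Uf \<omega>) (Gf \<omega>)} =
     {\<omega> \<in> space M. (\<forall>j<s. \<bar>gdotu n (Uf \<omega>) (Gf \<omega>) j 0\<bar> \<le> 5 * sqrt (ln (real n))) \<and>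
       (\<forall>j<s. \<forall>t\<in>{2..r+2}. 0.5 * sqrt (real k) \<le> acoef \<epsilon> r k n (Uf \<omega>) (Gf \<omega>) t j \<and>
                          acoef \<epsilon> r k n (Uf \<omega>) (Gf \<omega>) t j \<le> 2 * sqrt (real k))} \<inter>
     (\<Inter>t\<in>{2..r+2}. space M - (\<Union>m. Small t m \<union> Large t m))"
    unfolding good_event_def Small_def Large_def sv by auto
  also have "\<dots> \<in> sets M"
    unfolding acoef_def Pg_def gdotu_def by measurable
  finally show ?thesis .
qed

section \<open>Probability of the good event\<close>

definition failure_prob_bound :: "nat \<Rightarrow> nat \<Rightarrow> nat \<Rightarrow> nat \<Rightarrow> real" where
  "failure_prob_bound n r s k = real s * sqrt 2 * exp (- (25 * ln (real n)) / 4)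
     + real s * (real r + 1) * 32 / (9 * real k) + 64 * (real r + 1) * (real s)\<^sup>2 / real k"

lemma prob_good_event_given_orthogonal:
  assumes U: "Defs.orthogonal_mat n U" and n: "n \<ge> 2" and k: "k > 0"
    and card: "\<And>t. t \<in> {2..r+2} \<Longrightarrow> card (eigen_indices \<epsilon> r k n t) = k"
  shows "1 - failure_prob_bound n r s k
    \<le> measure (gauss_meas s n) {G \<in> space (gauss_meas s n). good_event \<epsilon> n r s k U G}"
proof -
  interpret P: prob_space "gauss_meas s n" by (rule prob_space_gauss_meas)
  let ?S = "space (gauss_meas s n)"
  let ?E = "eigen_indices \<epsilon> r k n"
  define Bad1 where "Bad1 = (\<Union>j<s. {G \<in> ?S. 25 * ln (real n) \<le> (gdotu n U G j 0)\<^sup>2})"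
  define Bad2 where "Bad2 = (\<Union>j<s. \<Union>t\<in>{2..r+2}.
    {G \<in> ?S. 9 * (real k)\<^sup>2 / 16 \<le> (proj_inner n U (?E t) G j j - k)\<^sup>2})"
  define Bad3 where "Bad3 = {G \<in> ?S. (real k)\<^sup>2 / 64 \<le>
      (\<Sum>t\<in>{2..r+2}. \<Sum>j<s. \<Sum>l\<in>{..<s}-{j}. (proj_inner n U (?E t) G j l)\<^sup>2)}"
  have [measurable]: "Bad1 \<in> sets (gauss_meas s n)" "Bad2 \<in> sets (gauss_meas s n)"
    "Bad3 \<in> sets (gauss_meas s n)"
    unfolding Bad1_def Bad2_def Bad3_def by measurable
  have "P.prob Bad1 \<le> real s * sqrt 2 * exp (- (25 * ln (real n)) / 4)"
    unfolding Bad1_def using n by (intro prob_exists_gdotu_square_ge[OF _ U]) auto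
  moreover have "P.prob Bad2 \<le> real s * (real r + 1) * 32 / (9 * real k)"
  proof -
    have "P.prob Bad2 \<le> real s * card {2..r+2} * (2 * real k / (9 * (real k)\<^sup>2 / 16))"
      unfolding Bad2_def by (rule prob_exists_proj_inner_diag_far[OF U]) (use card k in auto)
    also have "\<dots> = real s * (real r + 1) * 32 / (9 * real k)"
      using k by (simp add: power2_eq_square field_simps)
    finally show ?thesis .
  qed
  moreover have "P.prob Bad3 \<le> 64 * (real r + 1) * (real s)\<^sup>2 / real k"
  proof -
    have "P.prob Bad3 \<le> card {2..r+2} * s * s * k / ((real k)\<^sup>2 / 64)"
      unfolding Bad3_def using card k by (intro prob_offdiag_sum_ge[OF U]) auto
    also have "\<dots> = 64 * (real r + 1) * (real s)\<^sup>2 / real k"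
      using k by (simp add: power2_eq_square field_simps)
    finally show ?thesis .
  qed
  moreover have "P.prob (Bad1 \<union> Bad2 \<union> Bad3) \<le> P.prob Bad1 + P.prob Bad2 + P.prob Bad3"
    by (intro order_trans[OF measure_Un_le] add_mono measure_Un_le) auto
  ultimately have "P.prob (Bad1 \<union> Bad2 \<union> Bad3) \<le> failure_prob_bound n r s k"
    unfolding failure_prob_bound_def by linarith
  then have "1 - failure_prob_bound n r s k \<le> P.prob (?S - (Bad1 \<union> Bad2 \<union> Bad3))"
    by (subst P.prob_compl) auto
  also have "\<dots> \<le> P.prob {G \<in> ?S. good_event \<epsilon> n r s k U G}"
  proof (rule P.finite_measure_mono)
    show "?S - (Bad1 \<union> Bad2 \<union> Bad3) \<subseteq> {G \<in> ?S. good_event \<epsilon> n r s k U G}"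
      by (auto intro!: good_event_if_statistics_close[OF U k] simp: Bad1_def Bad2_def Bad3_def not_le)
    show "{G \<in> ?S. good_event \<epsilon> n r s k U G} \<in> sets (gauss_meas s n)"
      using sets_good_event[where M="gauss_meas s n" and Uf="\<lambda>_. U" and Gf="\<lambda>G. G"] by simp
  qed
  finally show ?thesis .
qed

lemma measure_pair_ge_if_AE_sections:
  assumes M: "prob_space M" and N: "prob_space N"
    and A: "{\<omega> \<in> space (M \<Otimes>\<^sub>M N). P (fst \<omega>) (snd \<omega>)} \<in> sets (M \<Otimes>\<^sub>M N)"
    and AE: "AE x in M. p \<le> measure N {y \<in> space N. P x y}"
  shows "p \<le> measure (M \<Otimes>\<^sub>M N) {\<omega> \<in> space (M \<Otimes>\<^sub>M N). P (fst \<omega>) (snd \<omega>)}"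
    (is "_ \<le> measure _ ?A")
proof -
  interpret M: prob_space M by (rule M)
  interpret N: prob_space N by (rule N)
  interpret MN: prob_space "M \<Otimes>\<^sub>M N" by (rule prob_space_pair) unfold_locales
  have "AE x in M. ennreal p \<le> emeasure N (Pair x -` ?A)"
  proof (rule AE_mp[OF AE], rule AE_I2, rule impI)
    fix x assume "x \<in> space M" and p: "p \<le> measure N {y \<in> space N. P x y}"
    then have "Pair x -` ?A = {y \<in> space N. P x y}" by (auto simp: space_pair_measure)
    then show "ennreal p \<le> emeasure N (Pair x -` ?A)"
      using p N.emeasure_eq_measure by (simp add: ennreal_leI)
  qed
  then have "(\<integral>\<^sup>+x. ennreal p \<partial>M) \<le> (\<integral>\<^sup>+x. emeasure N (Pair x -` ?A) \<partial>M)"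
    by (rule nn_integral_mono_AE)
  also have "\<dots> = emeasure (M \<Otimes>\<^sub>M N) ?A"
    by (rule N.emeasure_pair_measure_alt[OF A, symmetric])
  finally have "ennreal p \<le> ennreal (measure (M \<Otimes>\<^sub>M N) ?A)"
    by (simp add: M.emeasure_space_1 MN.emeasure_eq_measure)
  then show ?thesis by (cases "p \<ge> 0") (auto simp: ennreal_le_iff)
qed

section \<open>Choice of parameters\<close>

lemma hard_instance_parameters:
  assumes c: "c > 0" and \<epsilon>: "0 < \<epsilon>" "\<epsilon> < 1/2" and n: "real n \<ge> \<epsilon> powr (-2.01)"
    and r: "real r = c * ln (real n) / sqrt \<epsilon>" and k: "real n - 1 = real k * (real r + 1)"
    and kr: "k \<ge> 100 * r"
  shows "n \<ge> 4" "r \<ge> 1" "k > 0" "n = k * (r + 1) + 1"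
proof -
  have "(2::real) powr 2 \<le> 2 powr 2.01" by (intro powr_mono) auto
  also have "\<dots> \<le> (1/\<epsilon>) powr 2.01" using \<epsilon> by (intro powr_mono2) (auto simp: field_simps)
  also have "\<dots> = \<epsilon> powr (-2.01)" using \<epsilon> by (simp add: powr_minus_divide powr_divide)
  finally show n4: "n \<ge> 4" using n by simp
  then have "real r > 0" unfolding r using c \<epsilon> by simp
  then show r1: "r \<ge> 1" by simp
  then show "k > 0" using kr by simp
  have "real n = real (k * (r + 1) + 1)" using k by (simp add: algebra_simps)
  then show "n = k * (r + 1) + 1" by (simp only: of_nat_eq_iff)
qed

text \<open>The slack between \<open>\<epsilon> powr -2\<close> and \<open>\<epsilon> powr -2.01\<close> absorbs \<open>ln\<^sup>4 n \<le> 804\<^sup>4 n powr (1/201)\<close>.\<close>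
lemma hard_instance_r_pow4_le:
  assumes c: "0 < c" "c \<le> 1/100000" and \<epsilon>: "0 < \<epsilon>" and n: "real n \<ge> \<epsilon> powr (-2.01)" "n \<ge> 4"
    and r: "real r = c * ln (real n) / sqrt \<epsilon>"
  shows "(real r)^4 \<le> real n / 10^8"
proof -
  define L where "L = ln (real n)"
  have L: "L > 0" unfolding L_def using n(2) by simp
  have "\<epsilon> powr 2 = \<epsilon>\<^sup>2" using \<epsilon> by (simp only: powr_numeral less_imp_le)
  then have "1 / \<epsilon>\<^sup>2 = \<epsilon> powr (-2)" by (simp add: powr_minus inverse_eq_divide)
  also have "\<dots> = (\<epsilon> powr (-2.01)) powr (200/201)" by (simp add: powr_powr)
  also have "\<dots> \<le> real n powr (200/201)" using n \<epsilon> by (intro powr_mono2) auto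
  finally have eps: "1 / \<epsilon>\<^sup>2 \<le> real n powr (200/201)" .
  have "L / 804 = ln (real n powr (1/804))" unfolding L_def using n(2) by (simp add: ln_powr)
  also have "\<dots> \<le> real n powr (1/804) - 1" using n(2) by (intro ln_le_minus_one) simp
  finally have "L \<le> 804 * real n powr (1/804)" by simp
  then have "L^4 \<le> (804 * real n powr (1/804))^4" using L by (intro power_mono) auto
  also have "\<dots> = 804^4 * real n powr (1/201)"
    using n(2) by (simp add: power_mult_distrib powr_power)
  finally have log: "L^4 \<le> 804^4 * real n powr (1/201)" .
  have "(sqrt \<epsilon>)^4 = ((sqrt \<epsilon>)\<^sup>2)\<^sup>2" by (simp flip: power_mult)
  then have "(sqrt \<epsilon>)^4 = \<epsilon>\<^sup>2" using \<epsilon> by simp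
  then have "(real r)^4 = c^4 * L^4 * (1 / \<epsilon>\<^sup>2)"
    unfolding r L_def by (simp add: power_divide power_mult_distrib)
  also have "\<dots> \<le> c^4 * (804^4 * real n powr (1/201)) * real n powr (200/201)"
    using log eps c L by (intro mult_mono) auto
  also have "\<dots> = (804 * c)^4 * real n"
    using n(2) by (simp add: power_mult_distrib powr_add[symmetric])
  also have "\<dots> \<le> (804 / 100000)^4 * real n" using c by (intro mult_right_mono power_mono) auto
  also have "\<dots> \<le> real n / 10^8" by (simp add: power4_eq_xxxx)
  finally show ?thesis .
qed

lemma failure_prob_bound_le:
  assumes n: "n \<ge> 4" and r: "r \<ge> 1" and k: "k > 0" and nk: "n = k * (r + 1) + 1"
    and r4: "(real r)^4 \<le> real n / 10^8"
  shows "failure_prob_bound n r r k \<le> 1/10"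
proof -
  define \<rho> where "\<rho> = real r"
  have \<rho>: "\<rho> \<ge> 1" using r by (simp add: \<rho>_def)
  have n1: "real n - 1 > 0" using n by simp
  have "exp (- (25 * ln (real n)) / 4) \<le> exp (- (real 6 * ln (real n)))" using n by simp
  also have "\<dots> = inverse (real n ^ 6)" unfolding exp_minus exp_of_nat_mult using n by simp
  finally have tail: "exp (- (25 * ln (real n)) / 4) \<le> inverse (real n ^ 6)" .
  have "r \<le> n" using nk k by (cases k) auto
  then have "\<rho> * sqrt 2 * exp (- (25 * ln (real n)) / 4) \<le> real n * 2 * inverse (real n ^ 6)"
    using tail real_sqrt_le_mono[of 2 4] unfolding \<rho>_def by (intro mult_mono) auto
  also have "\<dots> = 2 / real n ^ 5" using n by (simp add: field_simps power_eq_if)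
  also have "\<dots> \<le> 2 / 4 ^ 5" using n by (intro divide_left_mono power_mono) auto
  finally have gaussian_tail: "\<rho> * sqrt 2 * exp (- (25 * ln (real n)) / 4) \<le> 1/100" by simp
  have nk': "real n - 1 = real k * (\<rho> + 1)" using nk unfolding \<rho>_def by (simp add: algebra_simps)
  have "\<rho> + 1 \<noteq> 0" using \<rho> by simp
  then have inv_k: "1 / real k = (\<rho> + 1) / (real n - 1)" unfolding nk' by simp
  have "\<rho> * (\<rho> + 1) * 32 / (9 * real k) + 64 * (\<rho> + 1) * \<rho>\<^sup>2 / real k =
      \<rho> * (\<rho> + 1)^2 * (32/9 + 64 * \<rho>) / (real n - 1)"
    using inv_k k by (simp add: field_simps power2_eq_square)
  also have "\<dots> \<le> \<rho> * (4 * \<rho>^2) * (68 * \<rho>) / (real n - 1)"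
  proof -
    have "(\<rho> + 1)^2 \<le> (2 * \<rho>)^2" using \<rho> by (intro power_mono) auto
    then show ?thesis using \<rho> n1 by (intro divide_right_mono mult_mono) (auto simp: power_mult_distrib)
  qed
  also have "\<dots> = 272 * \<rho>^4 / (real n - 1)" by (simp add: power2_eq_square power4_eq_xxxx)
  also have "\<dots> \<le> 272 * (2 * (real n - 1) / 10^8) / (real n - 1)"
    using r4 n n1 unfolding \<rho>_def by (intro divide_right_mono) auto
  also have "\<dots> \<le> 1/100" using n1 by simp
  finally have "\<rho> * (\<rho> + 1) * 32 / (9 * real k) + 64 * (\<rho> + 1) * \<rho>\<^sup>2 / real k \<le> 1/100" .
  with gaussian_tail show ?thesis unfolding failure_prob_bound_def \<rho>_def by linarith
qed

lemma good_event_prob_ge_given_haar: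
  assumes \<mu>: "haar_orthogonal n \<mu>" and n: "n \<ge> 2" and k: "k > 0"
    and card: "\<And>t. t \<in> {2..r+2} \<Longrightarrow> card (eigen_indices \<epsilon> r k n t) = k"
  shows "1 - failure_prob_bound n r s k \<le> measure (\<mu> \<Otimes>\<^sub>M gauss_meas s n)
    {\<omega> \<in> space (\<mu> \<Otimes>\<^sub>M gauss_meas s n). good_event \<epsilon> n r s k (fst \<omega>) (snd \<omega>)}"
proof (rule measure_pair_ge_if_AE_sections)
  from \<mu> have sets_\<mu>: "sets \<mu> = sets (mat_space n)" and "prob_space \<mu>"
    and orthogonal: "AE U in \<mu>. Defs.orthogonal_mat n U" unfolding haar_orthogonal_def by auto
  show "prob_space \<mu>" "prob_space (gauss_meas s n)" by fact (rule prob_space_gauss_meas)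
  have [measurable]: "(\<lambda>U. U x) \<in> borel_measurable \<mu>" for x
    by (subst measurable_cong_sets[OF sets_\<mu> refl]) (rule mat_space_apply_measurable)
  show "{\<omega> \<in> space (\<mu> \<Otimes>\<^sub>M gauss_meas s n). good_event \<epsilon> n r s k (fst \<omega>) (snd \<omega>)}
      \<in> sets (\<mu> \<Otimes>\<^sub>M gauss_meas s n)"
    by (rule sets_good_event) auto
  show "AE U in \<mu>. 1 - failure_prob_bound n r s k
      \<le> measure (gauss_meas s n) {G \<in> space (gauss_meas s n). good_event \<epsilon> n r s k U G}"
    using orthogonal by eventually_elim (rule prob_good_event_given_orthogonal[OF _ n k card])
qed

lemma good_event_prob_ge_explicit:
  assumes c: "0 < c" "c \<le> 1/100000" and \<epsilon>: "0 < \<epsilon>" "\<epsilon> < 1/2" and n: "real n \<ge> \<epsilon> powr (-2.01)"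
    and r: "real r = c * ln (real n) / sqrt \<epsilon>" and s: "s = r"
    and k: "real n - 1 = real k * (real r + 1)" "k \<ge> 100 * s" and \<mu>: "haar_orthogonal n \<mu>"
  shows "0.9 \<le> measure (\<mu> \<Otimes>\<^sub>M gauss_meas s n)
    {\<omega> \<in> space (\<mu> \<Otimes>\<^sub>M gauss_meas s n). good_event \<epsilon> n r s k (fst \<omega>) (snd \<omega>)}"
proof -
  note params = hard_instance_parameters[OF c(1) \<epsilon> n r k(1) k(2)[unfolded s]]
  have bound: "failure_prob_bound n r s k \<le> 1/10"
    using failure_prob_bound_le[OF params hard_instance_r_pow4_le[OF c \<epsilon>(1) n params(1) r]] s
    by simp
  have card: "card (eigen_indices \<epsilon> r k n t) = k" if "t \<in> {2..r+2}" for t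
    using card_eigen_indices[OF params(2,3,4) \<epsilon>(1)] that by auto
  have "1 - failure_prob_bound n r s k \<le> measure (\<mu> \<Otimes>\<^sub>M gauss_meas s n)
      {\<omega> \<in> space (\<mu> \<Otimes>\<^sub>M gauss_meas s n). good_event \<epsilon> n r s k (fst \<omega>) (snd \<omega>)}"
    by (rule good_event_prob_ge_given_haar[OF \<mu> _ params(3) card]) (use params(1) in simp)
  then show ?thesis using bound by simp
qed

theorem lemma5p5:
  shows "\<exists>C>0. \<exists>c0>0. \<forall>(c::real) (\<epsilon>::real) (n::nat) (r::nat) (s::nat) (k::nat) (\<mu>::rmat measure).
     0 < c \<and> c \<le> c0 \<and> 0 < \<epsilon> \<and> \<epsilon> < 1/2 \<and>
     real n \<ge> C * \<epsilon> powr (-2.01) \<and>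
     real r = c * ln (real n) / sqrt \<epsilon> \<and> s = r \<and>
     real n - 1 = real k * (real r + 1) \<and> k \<ge> 100 * s \<and>
     haar_orthogonal n \<mu>
     \<longrightarrow> measure (\<mu> \<Otimes>\<^sub>M gauss_meas s n)
           {\<omega> \<in> space (\<mu> \<Otimes>\<^sub>M gauss_meas s n). good_event \<epsilon> n r s k (fst \<omega>) (snd \<omega>)} \<ge> 0.9"
  by (rule exI[of _ "1::real"], rule conjI, simp, rule exI[of _ "1/100000::real"], rule conjI, simp,
      intro allI impI, elim conjE, unfold mult_1) (rule good_event_prob_ge_explicit)

end
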